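(* Let $M$ be a term of the CCV $\lambda\mu$-calculus and let $[\![M]\!]$ be its CPS translation, computed from an arbitrary syntax-tree representative of $M$ (the representatives may differ in how the equality (E2) is used to bracket $\mu$ and $\mathsf{where}$). If $[\![M]\!]\to^* N$ by $\beta\eta$-reduction in the target calculus, then $M\to^*(N^{-1})^{\downarrow}$ in the CCV $\lambda\mu$-calculus.
   Context: CCV $\lambda\mu$-calculus. Ordinary variables $x,y,z,\dots$ and continuation variables $k,l,m,\dots$ form disjoint sets. Terms $M$ and jumps $J$ are given by $M ::= x \mid \lambda x.M \mid MM \mid (M\ \mathsf{where}\ x:=M) \mid \mu k.J$ and $J ::= [k]M \mid (J\ \mathsf{where}\ x:=M)$. (Here $(L\ \mathsf{where}\ x:=M)$ is the let-construct $\mathsf{let}\ x=M\ \mathsf{in}\ L$ written body-first.) $\lambda x$ binds $x$ in its body; in $(L\ \mathsf{where}\ x:=M)$ and $(J\ \mathsf{where}\ x:=M)$ the variable $x$ is bound with scope $L$ (resp. $J$) only; $\mu k$ binds $k$. Terms and jumps are identified up to $\alpha$-conversion and up to the congruence generated by: (E1) $(L\ \mathsf{where}\ x:=(M\ \mathsf{where}\ y:=N))=((L\ \mathsf{where}\ x:=M)\ \mathsf{where}\ y:=N)$ if $y$ is not free in $L$; (E2) $((\mu k.J)\ \mathsf{where}\ x:=M)=\mu k.(J\ \mathsf{where}\ x:=M)$ if $k$ is not free in $M$; (E3) $[k](L\ \mathsf{where}\ x:=M)=([k]L\ \mathsf{where}\ x:=M)$. A value $V$ is a variable or a $\lambda$-abstraction;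 other terms are non-values ($N$ below denotes a non-value). Reduction rules ($z$ fresh): (ad$_1$) $NM\to (zM\ \mathsf{where}\ z:=N)$; (ad$_2$) $VN\to (Vz\ \mathsf{where}\ z:=N)$; ($\beta_\lambda$) $(\lambda x.M)V\to (M\ \mathsf{where}\ x:=V)$; ($\beta_{let}$) $(M\ \mathsf{where}\ x:=V)\to M\{V/x\}$; ($\beta_\mu$) $(M\ \mathsf{where}\ x:=\mu k.J)\to \mu k.J\{[k]\square\mapsto[k](M\ \mathsf{where}\ x:=\square)\}$; ($\beta_{jmp}$) $[l]\mu k.J\to J\{l/k\}$; ($\eta_\lambda$) $\lambda x.Vx\to V$ ($x$ not free in $V$); ($\eta_{let}$) $(x\ \mathsf{where}\ x:=M)\to M$; ($\eta_\mu$) $\mu k.[k]M\to M$ ($k$ not free in $M$). Here $J\{[k]\square\mapsto[k](M\ \mathsf{where}\ x:=\square)\}$ replaces, recursively, each subjump $[k]Q$ of $J$ with $k$ free by $[k](M\ \mathsf{where}\ x:=Q)$ (capture-avoiding), and $J\{l/k\}$ replaces each such $[k]Q$ by $[l]Q$. $\to$ is the compatible closure of these rules, $\to^*$ its reflexive-transitive closure. Reduction by $\eta_\mu$ is called vertical; $M^{\downarrow}$ denotes the normal form of $M$ with respect to vertical reductions. Target calculus: a sorted $\lambda$-calculus with ordinary variables $x$ (sort $W$) and continuation variables $k$ (sort $K$): $T::=\lambda k.Q\mid WW$, $Q::=KW\mid TK$, $W::=x\mid\lambda x.T$, $K::=k\mid\lambda x.Q$, with ordinary $\beta\eta$-reduction.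 CPS translation: for a CCV term $M$ and a target continuation $K$, define $\langle M\rangle[K]$ and $\langle J\rangle$ by: $\langle V\rangle[K]=KV^*$; $\langle V_1V_2\rangle[K]=V_1^*V_2^*K$; $\langle VN\rangle[K]=\langle N\rangle[\lambda y.V^*yK]$; $\langle NV\rangle[K]=\langle N\rangle[\lambda x.xV^*K]$; $\langle N_1N_2\rangle[K]=\langle N_1\rangle[\lambda x.\langle N_2\rangle[\lambda y.xyK]]$; $\langle (L\ \mathsf{where}\ x:=M)\rangle[K]=\langle M\rangle[\lambda x.\langle L\rangle[K]]$ (renaming $x$ if it is free in $K$); $\langle\mu k.J\rangle[K]=(\lambda k.\langle J\rangle)K$; $\langle[k]M\rangle=\langle M\rangle[k]$; $\langle (J\ \mathsf{where}\ x:=M)\rangle=\langle M\rangle[\lambda x.\langle J\rangle]$; $x^*=x$; $(\lambda x.M)^*=\lambda x k.\langle M\rangle[k]$; $[\![M]\!]=\lambda k.\langle M\rangle[k]$ (fresh $x,y,k$ where introduced). Inverse translation from the target calculus to CCV: $(\lambda k.Q)^{-1}=\mu k.Q^{-1}$; $(W_1W_2)^{-1}=W_1^{-1}W_2^{-1}$; $(KW)^{-1}=K^{-1}[W^{-1}]$; $(TK)^{-1}=K^{-1}[T^{-1}]$; $x^{-1}=x$; $(\lambda x.T)^{-1}=\lambda x.T^{-1}$; $k^{-1}=[k]\square$; $(\lambda x.Q)^{-1}=(Q^{-1}\ \mathsf{where}\ x:=\square)$, where $K^{-1}$ is a jump with one hole $\square$ and $K^{-1}[M]$ fills the hole with $M$.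 *)

theory Defs
  imports Main
begin

text \<open>
  Ordinary variables and
  continuation variables live in two separate index spaces.
  CCV raw syntax trees: Lam binds ordinary index 0 in its body;
  Where L M (= L where x := M) binds ordinary index 0 in L only;
  Mu J binds continuation index 0 in J; JWhere J M binds ordinary index 0 in J only.
  alpha-conversion is built in by the de Bruijn representation.
\<close>

datatype trm = Var nat | Lam trm | App trm trm | Where trm trm | Mu jmp
and jmp = Jmp nat trm | JWhere jmp trm

definition lift :: "(nat \<Rightarrow> nat) \<Rightarrow> nat \<Rightarrow> nat" where
  "lift f n = (case n of 0 \<Rightarrow> 0 | Suc m \<Rightarrow> Suc (f m))"

fun is_val :: "trm \<Rightarrow> bool" where
  "is_val (Var _) = True"
| "is_val (Lam _) = True"
| "is_val _ = False"

fun ren :: "(nat \<Rightarrow> nat) \<Rightarrow> (nat \<Rightarrow> nat) \<Rightarrow> trm \<Rightarrow> trm"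
and renJ :: "(nat \<Rightarrow> nat) \<Rightarrow> (nat \<Rightarrow> nat) \<Rightarrow> jmp \<Rightarrow> jmp" where
  "ren f g (Var n) = Var (f n)"
| "ren f g (Lam M) = Lam (ren (lift f) g M)"
| "ren f g (App M N) = App (ren f g M) (ren f g N)"
| "ren f g (Where L M) = Where (ren (lift f) g L) (ren f g M)"
| "ren f g (Mu J) = Mu (renJ f (lift g) J)"
| "renJ f g (Jmp k M) = Jmp (g k) (ren f g M)"
| "renJ f g (JWhere J M) = JWhere (renJ (lift f) g J) (ren f g M)"

definition liftS :: "(nat \<Rightarrow> trm) \<Rightarrow> nat \<Rightarrow> trm" where
  "liftS \<sigma> n = (case n of 0 \<Rightarrow> Var 0 | Suc m \<Rightarrow> ren Suc id (\<sigma> m))"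

fun subst :: "(nat \<Rightarrow> trm) \<Rightarrow> trm \<Rightarrow> trm"
and substJ :: "(nat \<Rightarrow> trm) \<Rightarrow> jmp \<Rightarrow> jmp" where
  "subst \<sigma> (Var n) = \<sigma> n"
| "subst \<sigma> (Lam M) = Lam (subst (liftS \<sigma>) M)"
| "subst \<sigma> (App M N) = App (subst \<sigma> M) (subst \<sigma> N)"
| "subst \<sigma> (Where L M) = Where (subst (liftS \<sigma>) L) (subst \<sigma> M)"
| "subst \<sigma> (Mu J) = Mu (substJ (ren id Suc \<circ> \<sigma>) J)"
| "substJ \<sigma> (Jmp k M) = Jmp k (subst \<sigma> M)"
| "substJ \<sigma> (JWhere J M) = JWhere (substJ (liftS \<sigma>) J) (subst \<sigma> M)"

definition cons1 :: "trm \<Rightarrow> nat \<Rightarrow> trm" where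
  "cons1 V n = (case n of 0 \<Rightarrow> V | Suc m \<Rightarrow> Var m)"

text \<open>Structural substitution  J{[k]\<box> \<mapsto> [k](P where x := \<box>)}.
  P is the body with the where-bound variable x as ordinary index 0;
  k is the (current) index of the continuation variable.\<close>
fun ss :: "trm \<Rightarrow> nat \<Rightarrow> trm \<Rightarrow> trm"
and ssJ :: "trm \<Rightarrow> nat \<Rightarrow> jmp \<Rightarrow> jmp" where
  "ss P k (Var n) = Var n"
| "ss P k (Lam M) = Lam (ss (ren (lift Suc) id P) k M)"
| "ss P k (App M N) = App (ss P k M) (ss P k N)"
| "ss P k (Where L M) = Where (ss (ren (lift Suc) id P) k L) (ss P k M)"
| "ss P k (Mu J) = Mu (ssJ (ren id Suc P) (Suc k) J)"
| "ssJ P k (Jmp l Q) =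
     (if l = k then Jmp k (Where P (ss P k Q)) else Jmp l (ss P k Q))"
| "ssJ P k (JWhere J Q) = JWhere (ssJ (ren (lift Suc) id P) k J) (ss P k Q)"

definition kcons :: "nat \<Rightarrow> nat \<Rightarrow> nat" where
  "kcons l n = (case n of 0 \<Rightarrow> l | Suc m \<Rightarrow> m)"

inductive eqv :: "trm \<Rightarrow> trm \<Rightarrow> bool"
and eqvJ :: "jmp \<Rightarrow> jmp \<Rightarrow> bool" where
  E1: "eqv (Where L (Where M N)) (Where (Where (ren (lift Suc) id L) M) N)"
| E2: "eqv (Where (Mu J) M) (Mu (JWhere J (ren id Suc M)))"
| E3: "eqvJ (Jmp k (Where L M)) (JWhere (Jmp k L) M)"
| refl: "eqv M M"
| sym: "eqv M N \<Longrightarrow> eqv N M"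
| trans: "eqv M N \<Longrightarrow> eqv N P \<Longrightarrow> eqv M P"
| reflJ: "eqvJ J J"
| symJ: "eqvJ J J' \<Longrightarrow> eqvJ J' J"
| transJ: "eqvJ J J' \<Longrightarrow> eqvJ J' J'' \<Longrightarrow> eqvJ J J''"
| c_lam: "eqv M M' \<Longrightarrow> eqv (Lam M) (Lam M')"
| c_app1: "eqv M M' \<Longrightarrow> eqv (App M N) (App M' N)"
| c_app2: "eqv N N' \<Longrightarrow> eqv (App M N) (App M N')"
| c_wh1: "eqv M M' \<Longrightarrow> eqv (Where M N) (Where M' N)"
| c_wh2: "eqv N N' \<Longrightarrow> eqv (Where M N) (Where M N')"
| c_mu: "eqvJ J J' \<Longrightarrow> eqv (Mu J) (Mu J')"
| c_jmp: "eqv M M' \<Longrightarrow> eqvJ (Jmp k M) (Jmp k M')"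
| c_jwh1: "eqvJ J J' \<Longrightarrow> eqvJ (JWhere J N) (JWhere J' N)"
| c_jwh2: "eqv N N' \<Longrightarrow> eqvJ (JWhere J N) (JWhere J N')"

text \<open>Root reduction rules on terms (the z in ad1/ad2 is the fresh index 0).\<close>
inductive top_t :: "trm \<Rightarrow> trm \<Rightarrow> bool" where
  ad1: "\<not> is_val N \<Longrightarrow> top_t (App N M) (Where (App (Var 0) (ren Suc id M)) N)"
| ad2: "is_val V \<Longrightarrow> \<not> is_val N \<Longrightarrow> top_t (App V N) (Where (App (ren Suc id V) (Var 0)) N)"
| beta_lam: "is_val V \<Longrightarrow> top_t (App (Lam M) V) (Where M V)"
| beta_let: "is_val V \<Longrightarrow> top_t (Where M V) (subst (cons1 V) M)"
| beta_mu: "top_t (Where M (Mu J)) (Mu (ssJ (ren id Suc M) 0 J))"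
| eta_lam: "is_val V \<Longrightarrow> top_t (Lam (App (ren Suc id V) (Var 0))) V"
| eta_let: "top_t (Where (Var 0) M) M"
| eta_mu: "top_t (Mu (Jmp 0 (ren id Suc M))) M"

inductive top_j :: "jmp \<Rightarrow> jmp \<Rightarrow> bool" where
  beta_jmp: "top_j (Jmp l (Mu J)) (renJ id (kcons l) J)"

inductive vert_t :: "trm \<Rightarrow> trm \<Rightarrow> bool" where
  "vert_t (Mu (Jmp 0 (ren id Suc M))) M"

inductive cstep :: "(trm \<Rightarrow> trm \<Rightarrow> bool) \<Rightarrow> (jmp \<Rightarrow> jmp \<Rightarrow> bool) \<Rightarrow> trm \<Rightarrow> trm \<Rightarrow> bool"
and cstepJ :: "(trm \<Rightarrow> trm \<Rightarrow> bool) \<Rightarrow> (jmp \<Rightarrow> jmp \<Rightarrow> bool) \<Rightarrow> jmp \<Rightarrow> jmp \<Rightarrow> bool"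
for R S where
  top: "R M N \<Longrightarrow> cstep R S M N"
| topJ: "S J J' \<Longrightarrow> cstepJ R S J J'"
| s_lam: "cstep R S M M' \<Longrightarrow> cstep R S (Lam M) (Lam M')"
| s_app1: "cstep R S M M' \<Longrightarrow> cstep R S (App M N) (App M' N)"
| s_app2: "cstep R S N N' \<Longrightarrow> cstep R S (App M N) (App M N')"
| s_wh1: "cstep R S M M' \<Longrightarrow> cstep R S (Where M N) (Where M' N)"
| s_wh2: "cstep R S N N' \<Longrightarrow> cstep R S (Where M N) (Where M N')"
| s_mu: "cstepJ R S J J' \<Longrightarrow> cstep R S (Mu J) (Mu J')"
| s_jmp: "cstep R S M M' \<Longrightarrow> cstepJ R S (Jmp k M) (Jmp k M')"
| s_jwh1: "cstepJ R S J J' \<Longrightarrow> cstepJ R S (JWhere J N) (JWhere J' N)"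
| s_jwh2: "cstep R S N N' \<Longrightarrow> cstepJ R S (JWhere J N) (JWhere J N')"

definition ccv_step :: "trm \<Rightarrow> trm \<Rightarrow> bool" where
  "ccv_step M N \<longleftrightarrow> (\<exists>M' N'. eqv M M' \<and> cstep top_t top_j M' N' \<and> eqv N' N)"

definition ccv_red :: "trm \<Rightarrow> trm \<Rightarrow> bool" where
  "ccv_red = (\<lambda>M N. eqv M N \<or> ccv_step M N)\<^sup>*\<^sup>*"

definition vstep :: "trm \<Rightarrow> trm \<Rightarrow> bool" where
  "vstep M N \<longleftrightarrow> (\<exists>M' N'. eqv M M' \<and> cstep vert_t (\<lambda>_ _. False) M' N' \<and> eqv N' N)"

definition vert_nf :: "trm \<Rightarrow> trm \<Rightarrow> bool" where
  "vert_nf M P \<longleftrightarrow> (\<lambda>A B. eqv A B \<or> vstep A B)\<^sup>*\<^sup>* M P \<and> \<not> (\<exists>Q. vstep P Q)"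

datatype tT = TLamK tQ | TApp tW tW
and tQ = QK tK tW | QT tT tK
and tW = WVar nat | WLam tT
and tK = KVar nat | KLam tQ

fun renT :: "(nat \<Rightarrow> nat) \<Rightarrow> (nat \<Rightarrow> nat) \<Rightarrow> tT \<Rightarrow> tT"
and renQ :: "(nat \<Rightarrow> nat) \<Rightarrow> (nat \<Rightarrow> nat) \<Rightarrow> tQ \<Rightarrow> tQ"
and renW :: "(nat \<Rightarrow> nat) \<Rightarrow> (nat \<Rightarrow> nat) \<Rightarrow> tW \<Rightarrow> tW"
and renK :: "(nat \<Rightarrow> nat) \<Rightarrow> (nat \<Rightarrow> nat) \<Rightarrow> tK \<Rightarrow> tK" where
  "renT f g (TLamK Q) = TLamK (renQ f (lift g) Q)"
| "renT f g (TApp a b) = TApp (renW f g a) (renW f g b)"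
| "renQ f g (QK K W) = QK (renK f g K) (renW f g W)"
| "renQ f g (QT T K) = QT (renT f g T) (renK f g K)"
| "renW f g (WVar n) = WVar (f n)"
| "renW f g (WLam T) = WLam (renT (lift f) g T)"
| "renK f g (KVar n) = KVar (g n)"
| "renK f g (KLam Q) = KLam (renQ (lift f) g Q)"

definition liftW :: "(nat \<Rightarrow> tW) \<Rightarrow> nat \<Rightarrow> tW" where
  "liftW \<sigma> n = (case n of 0 \<Rightarrow> WVar 0 | Suc m \<Rightarrow> renW Suc id (\<sigma> m))"

definition liftK :: "(nat \<Rightarrow> tK) \<Rightarrow> nat \<Rightarrow> tK" where
  "liftK \<tau> n = (case n of 0 \<Rightarrow> KVar 0 | Suc m \<Rightarrow> renK id Suc (\<tau> m))"

fun subT :: "(nat \<Rightarrow> tW) \<Rightarrow> (nat \<Rightarrow> tK) \<Rightarrow> tT \<Rightarrow> tT"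
and subQ :: "(nat \<Rightarrow> tW) \<Rightarrow> (nat \<Rightarrow> tK) \<Rightarrow> tQ \<Rightarrow> tQ"
and subW :: "(nat \<Rightarrow> tW) \<Rightarrow> (nat \<Rightarrow> tK) \<Rightarrow> tW \<Rightarrow> tW"
and subK :: "(nat \<Rightarrow> tW) \<Rightarrow> (nat \<Rightarrow> tK) \<Rightarrow> tK \<Rightarrow> tK" where
  "subT \<sigma> \<tau> (TLamK Q) = TLamK (subQ (renW id Suc \<circ> \<sigma>) (liftK \<tau>) Q)"
| "subT \<sigma> \<tau> (TApp a b) = TApp (subW \<sigma> \<tau> a) (subW \<sigma> \<tau> b)"
| "subQ \<sigma> \<tau> (QK K W) = QK (subK \<sigma> \<tau> K) (subW \<sigma> \<tau> W)"
| "subQ \<sigma> \<tau> (QT T K) = QT (subT \<sigma> \<tau> T) (subK \<sigma> \<tau> K)"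
| "subW \<sigma> \<tau> (WVar n) = \<sigma> n"
| "subW \<sigma> \<tau> (WLam T) = WLam (subT (liftW \<sigma>) (renK Suc id \<circ> \<tau>) T)"
| "subK \<sigma> \<tau> (KVar n) = \<tau> n"
| "subK \<sigma> \<tau> (KLam Q) = KLam (subQ (liftW \<sigma>) (renK Suc id \<circ> \<tau>) Q)"

definition consW :: "tW \<Rightarrow> nat \<Rightarrow> tW" where
  "consW W n = (case n of 0 \<Rightarrow> W | Suc m \<Rightarrow> WVar m)"

definition consK :: "tK \<Rightarrow> nat \<Rightarrow> tK" where
  "consK K n = (case n of 0 \<Rightarrow> K | Suc m \<Rightarrow> KVar m)"

inductive stT :: "tT \<Rightarrow> tT \<Rightarrow> bool"
and stQ :: "tQ \<Rightarrow> tQ \<Rightarrow> bool"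
and stW :: "tW \<Rightarrow> tW \<Rightarrow> bool"
and stK :: "tK \<Rightarrow> tK \<Rightarrow> bool" where
  betaW: "stT (TApp (WLam T) W) (subT (consW W) KVar T)"
| betaK: "stQ (QT (TLamK Q) K) (subQ WVar (consK K) Q)"
| betaQ: "stQ (QK (KLam Q) W) (subQ (consW W) KVar Q)"
| etaW: "stW (WLam (TApp (renW Suc id W) (WVar 0))) W"
| etaT: "stT (TLamK (QT (renT id Suc T) (KVar 0))) T"
| etaK: "stK (KLam (QK (renK Suc id K) (WVar 0))) K"
| cT_lam: "stQ Q Q' \<Longrightarrow> stT (TLamK Q) (TLamK Q')"
| cT_app1: "stW a a' \<Longrightarrow> stT (TApp a b) (TApp a' b)"
| cT_app2: "stW b b' \<Longrightarrow> stT (TApp a b) (TApp a b')"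
| cQ_K1: "stK K K' \<Longrightarrow> stQ (QK K W) (QK K' W)"
| cQ_K2: "stW W W' \<Longrightarrow> stQ (QK K W) (QK K W')"
| cQ_T1: "stT T T' \<Longrightarrow> stQ (QT T K) (QT T' K)"
| cQ_T2: "stK K K' \<Longrightarrow> stQ (QT T K) (QT T K')"
| cW_lam: "stT T T' \<Longrightarrow> stW (WLam T) (WLam T')"
| cK_lam: "stQ Q Q' \<Longrightarrow> stK (KLam Q) (KLam Q')"

text \<open>fx / fk map the free ordinary / continuation indices of the CCV term to
  indices of the current target context; the continuation K lives in that context.
  star is V^*, cps is \<langle>M\<rangle>[K], cpsJ is \<langle>J\<rangle>.\<close>
fun star :: "(nat \<Rightarrow> nat) \<Rightarrow> (nat \<Rightarrow> nat) \<Rightarrow> trm \<Rightarrow> tW"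
and cps :: "(nat \<Rightarrow> nat) \<Rightarrow> (nat \<Rightarrow> nat) \<Rightarrow> trm \<Rightarrow> tK \<Rightarrow> tQ"
and cpsJ :: "(nat \<Rightarrow> nat) \<Rightarrow> (nat \<Rightarrow> nat) \<Rightarrow> jmp \<Rightarrow> tQ" where
  "star fx fk (Var n) = WVar (fx n)"
| "star fx fk (Lam M) = WLam (TLamK (cps (lift fx) (Suc \<circ> fk) M (KVar 0)))"
| "star fx fk (App _ _) = undefined"
| "star fx fk (Where _ _) = undefined"
| "star fx fk (Mu _) = undefined"
| "cps fx fk (Var n) K = QK K (WVar (fx n))"
| "cps fx fk (Lam M) K = QK K (WLam (TLamK (cps (lift fx) (Suc \<circ> fk) M (KVar 0))))"
| "cps fx fk (App A B) K =
    (if is_val A \<and> is_val B then QT (TApp (star fx fk A) (star fx fk B)) K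
     else if is_val A then
       cps fx fk B (KLam (QT (TApp (star (Suc \<circ> fx) fk A) (WVar 0)) (renK Suc id K)))
     else if is_val B then
       cps fx fk A (KLam (QT (TApp (WVar 0) (star (Suc \<circ> fx) fk B)) (renK Suc id K)))
     else
       cps fx fk A (KLam (cps (Suc \<circ> fx) fk B
          (KLam (QT (TApp (WVar 1) (WVar 0)) (renK (Suc \<circ> Suc) id K))))))"
| "cps fx fk (Where L M) K = cps fx fk M (KLam (cps (lift fx) fk L (renK Suc id K)))"
| "cps fx fk (Mu J) K = QT (TLamK (cpsJ fx (lift fk) J)) K"
| "cpsJ fx fk (Jmp k M) = cps fx fk M (KVar (fk k))"
| "cpsJ fx fk (JWhere J M) = cps fx fk M (KLam (cpsJ (lift fx) fk J))"

definition CPS :: "trm \<Rightarrow> tT" where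
  "CPS M = TLamK (cps id Suc M (KVar 0))"

text \<open>invK K M is K^{-1}[M]; the hole of K^{-1} is never under a binder.\<close>
fun invT :: "tT \<Rightarrow> trm"
and invQ :: "tQ \<Rightarrow> jmp"
and invW :: "tW \<Rightarrow> trm"
and invK :: "tK \<Rightarrow> trm \<Rightarrow> jmp" where
  "invT (TLamK Q) = Mu (invQ Q)"
| "invT (TApp a b) = App (invW a) (invW b)"
| "invQ (QK K W) = invK K (invW W)"
| "invQ (QT T K) = invK K (invT T)"
| "invW (WVar n) = Var n"
| "invW (WLam T) = Lam (invT T)"
| "invK (KVar k) M = Jmp k M"
| "invK (KLam Q) M = JWhere (invQ Q) M"

end

theory Submission
  imports Defs
begin

text \<open>
  Write \<open>vnf\<close> for the normal form with respect to \<open>\<eta>\<^sub>\<mu>\<close> (the vertical normal form). The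
  inverse translation simulates target reduction up to \<open>vnf\<close>: for every \<open>\<beta>\<eta>\<close>-step
  \<open>T \<rightarrow> T'\<close> we have \<open>vnf(T\<^sup>-\<^sup>1) \<rightarrow>* vnf(T'\<^sup>-\<^sup>1)\<close>. A \<open>\<beta>\<close>-step on a value abstraction becomes
  \<open>\<beta>\<^sub>\<lambda>\<close> and \<open>\<beta>\<^sub>l\<^sub>e\<^sub>t\<close>, a \<open>\<beta>\<close>-step on a continuation abstraction becomes \<open>\<beta>\<^sub>\<mu>\<close> followed by \<open>\<beta>\<^sub>j\<^sub>m\<^sub>p\<close>
  (the target substitution is the structural substitution of the source), and the \<open>\<eta>\<close>-rules
  become \<open>\<eta>\<^sub>\<lambda>\<close>, \<open>\<eta>\<^sub>l\<^sub>e\<^sub>t\<close> or disappear in \<open>vnf\<close>. Conversely, by induction on \<open>M\<close> (for every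
  continuation), the administrative rules \<open>ad\<^sub>1\<close>, \<open>ad\<^sub>2\<close> together with \<open>\<eta>\<^sub>\<mu>\<close> reduce \<open>M\<close> to a term
  congruent to \<open>vnf(\<lbrakk>M\<rbrakk>\<^sup>-\<^sup>1)\<close>. Hence \<open>M \<rightarrow>* vnf(\<lbrakk>M\<rbrakk>\<^sup>-\<^sup>1) \<rightarrow>* vnf(N\<^sup>-\<^sup>1)\<close>, and every vertical
  normal form of \<open>N\<^sup>-\<^sup>1\<close> is congruent to \<open>vnf(N\<^sup>-\<^sup>1)\<close>. Throughout, jumps are compared through
  their flattening \<open>[k]M\<close> given by (E3).
\<close>

section \<open>Renaming and substitution\<close>

lemma lift_0 [simp]: "lift f 0 = 0"
  and lift_Suc [simp]: "lift f (Suc n) = Suc (f n)"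
  by (simp_all add: lift_def)

lemma kcons_0 [simp]: "kcons l 0 = l"
  and kcons_Suc [simp]: "kcons l (Suc n) = n"
  by (simp_all add: kcons_def)

lemma nat_fun_eqI: "f 0 = g 0 \<Longrightarrow> (\<And>n. f (Suc n) = g (Suc n)) \<Longrightarrow> f = g"
  by (rule ext) (case_tac x, auto)

lemma lift_comp: "lift f \<circ> lift g = lift (f \<circ> g)"
  by (rule nat_fun_eqI) simp_all

lemma lift_lift [simp]: "lift f (lift g n) = lift (f \<circ> g) n"
  by (simp add: lift_def split: nat.split)

lemma lift_id [simp]: "lift id = id" "lift (\<lambda>x. x) = (\<lambda>x. x)"
  by (rule nat_fun_eqI, simp_all)+

lemma lift_comp_Suc: "lift g \<circ> Suc = Suc \<circ> g"
  by (rule ext) simp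

lemma ren_ren:
  "ren f g (ren f' g' M) = ren (f \<circ> f') (g \<circ> g') M"
  "renJ f g (renJ f' g' J) = renJ (f \<circ> f') (g \<circ> g') J"
  by (induction f' g' M and f' g' J arbitrary: f g and f g rule: ren_renJ.induct)
     (simp_all add: lift_comp)

lemma ren_id [simp]: "ren id id M = M" "renJ id id J = J"
  by (induction M and J) simp_all

lemma ren_lift_kshift: "ren f (lift g) (ren id Suc P) = ren id Suc (ren f g P)"
  by (simp add: ren_ren lift_comp_Suc)

lemma ren_lift_shift: "ren (lift f) g (ren Suc id M) = ren Suc id (ren f g M)"
  by (simp add: ren_ren lift_comp_Suc)

lemma ren_lift2_lift_Suc:
  "ren (lift (lift f)) g (ren (lift Suc) id P) = ren (lift Suc) id (ren (lift f) g P)"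
proof -
  have "lift (lift f) \<circ> lift Suc = lift Suc \<circ> lift f"
    by (rule nat_fun_eqI) simp_all
  then show ?thesis by (simp add: ren_ren)
qed

lemma is_val_ren [simp]: "is_val (ren f g V) = is_val V"
  by (cases V) auto

fun kfv :: "trm \<Rightarrow> nat set" and kfvJ :: "jmp \<Rightarrow> nat set" where
  "kfv (Var n) = {}"
| "kfv (Lam M) = kfv M"
| "kfv (App M N) = kfv M \<union> kfv N"
| "kfv (Where M N) = kfv M \<union> kfv N"
| "kfv (Mu J) = {n. Suc n \<in> kfvJ J}"
| "kfvJ (Jmp k M) = insert k (kfv M)"
| "kfvJ (JWhere J M) = kfvJ J \<union> kfv M"

lemma Suc_in_image_lift: "Suc n \<in> lift g ` S \<longleftrightarrow> (\<exists>m. Suc m \<in> S \<and> n = g m)"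
proof
  assume "Suc n \<in> lift g ` S"
  then obtain x where "x \<in> S" "Suc n = lift g x" by auto
  then show "\<exists>m. Suc m \<in> S \<and> n = g m"
    by (cases x) auto
next
  assume "\<exists>m. Suc m \<in> S \<and> n = g m"
  then obtain m where "Suc m \<in> S" "n = g m" by blast
  then show "Suc n \<in> lift g ` S" by (metis image_eqI lift_Suc)
qed

lemma kfv_ren:
  "kfv (ren f g M) = g ` kfv M"
  "kfvJ (renJ f g J) = g ` kfvJ J"
proof (induction f g M and f g J rule: ren_renJ.induct)
  case (5 f g J)
  then show ?case
    by (simp add: Suc_in_image_lift) blast
qed (simp_all add: image_Un)

lemma ren_cong:
  "(\<And>k. k \<in> kfv M \<Longrightarrow> g k = g' k) \<Longrightarrow> ren f g M = ren f g' M"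
  "(\<And>k. k \<in> kfvJ J \<Longrightarrow> g k = g' k) \<Longrightarrow> renJ f g J = renJ f g' J"
proof (induction f g M and f g J arbitrary: g' and g' rule: ren_renJ.induct)
  case (5 f g J)
  have "renJ f (lift g) J = renJ f (lift g') J"
    by (rule 5(1)) (use 5(2) in \<open>auto simp: lift_def split: nat.split\<close>)
  then show ?case by simp
qed auto

text \<open>Truncated subtraction: only meaningful when index \<open>0\<close> is not a free continuation variable.\<close>
definition kunshift :: "trm \<Rightarrow> trm" where
  "kunshift L = ren id (\<lambda>n. n - 1) L"

lemma kunshift_kshift [simp]: "kunshift (ren id Suc X) = X"
  unfolding kunshift_def by (simp add: ren_ren comp_def id_def[symmetric])

lemma kshift_kunshift: "0 \<notin> kfv L \<Longrightarrow> ren id Suc (kunshift L) = L"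
proof -
  assume z: "0 \<notin> kfv L"
  have "ren id (Suc \<circ> (\<lambda>n. n - 1)) L = ren id id L"
  proof (rule ren_cong)
    fix k assume "k \<in> kfv L"
    with z show "(Suc \<circ> (\<lambda>n. n - 1)) k = id k" by (cases k) auto
  qed
  then show ?thesis unfolding kunshift_def ren_ren by simp
qed

lemma kunshift_Where: "kunshift (Where L M) = Where (kunshift L) (kunshift M)"
  by (simp add: kunshift_def)

lemma kfv_kunshift: "0 \<notin> kfv L \<Longrightarrow> kfv (kunshift L) = {n. Suc n \<in> kfv L}"
proof -
  assume z: "0 \<notin> kfv L"
  have "(\<lambda>n. n - 1) ` kfv L = {n. Suc n \<in> kfv L}"
  proof (intro set_eqI iffI)
    fix x assume "x \<in> (\<lambda>n. n - 1) ` kfv L"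
    then obtain y where "y \<in> kfv L" "x = y - 1" by blast
    with z show "x \<in> {n. Suc n \<in> kfv L}" by (cases y) auto
  next
    fix x assume "x \<in> {n. Suc n \<in> kfv L}"
    then show "x \<in> (\<lambda>n. n - 1) ` kfv L" by (metis diff_Suc_1 image_eqI mem_Collect_eq)
  qed
  then show ?thesis by (simp add: kunshift_def kfv_ren)
qed

lemma ren_kcons_kshift [simp]: "ren id (kcons l) (ren id Suc L) = L"
  by (simp add: ren_ren comp_def id_def[symmetric])

lemma ren_kcons_eq_kunshift: "0 \<notin> kfv L \<Longrightarrow> ren id (kcons l) L = kunshift L"
  by (subst kshift_kunshift[symmetric]) simp_all

lemma liftS_0 [simp]: "liftS \<sigma> 0 = Var 0"
  and liftS_Suc [simp]: "liftS \<sigma> (Suc n) = ren Suc id (\<sigma> n)"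
  by (simp_all add: liftS_def)

lemma cons1_0 [simp]: "cons1 V 0 = V"
  and cons1_Suc [simp]: "cons1 V (Suc n) = Var n"
  by (simp_all add: cons1_def)

lemma liftS_Var [simp]: "liftS Var = Var"
  by (rule nat_fun_eqI) simp_all

lemma subst_Var [simp]: "subst Var M = M" "substJ Var J = J"
proof (induction M and J)
  case (Mu J)
  have "ren id Suc \<circ> Var = Var" by (rule ext) simp
  with Mu show ?case by simp
qed simp_all

lemma liftS_comp_lift: "liftS \<sigma> \<circ> lift f = liftS (\<sigma> \<circ> f)"
  by (rule nat_fun_eqI) simp_all

lemma subst_ren:
  "subst \<sigma> (ren f id M) = subst (\<sigma> \<circ> f) M"
  "substJ \<sigma> (renJ f id J) = substJ (\<sigma> \<circ> f) J"
proof (induction M and J arbitrary: \<sigma> f and \<sigma> f)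
  case (Mu J)
  then show ?case by (simp add: comp_def)
qed (simp_all add: liftS_comp_lift[unfolded comp_def] comp_def)

lemma ren_liftS: "ren (lift f) g \<circ> liftS \<sigma> = liftS (ren f g \<circ> \<sigma>)"
  by (rule nat_fun_eqI) (simp_all add: ren_ren comp_def)

lemma ren_subst:
  "ren f g (subst \<sigma> M) = subst (ren f g \<circ> \<sigma>) (ren id g M)"
  "renJ f g (substJ \<sigma> J) = substJ (ren f g \<circ> \<sigma>) (renJ id g J)"
proof (induction M and J arbitrary: \<sigma> f g and \<sigma> f g)
  case (Mu J)
  have "ren f (lift g) \<circ> (ren id Suc \<circ> \<sigma>) = ren id Suc \<circ> (ren f g \<circ> \<sigma>)"
    by (rule ext) (simp add: ren_lift_kshift)
  with Mu show ?case by (simp add: comp_def)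
qed (simp_all add: ren_liftS)

lemma ren_subst_cons1:
  "ren f g (subst (cons1 V) M) = subst (cons1 (ren f g V)) (ren (lift f) g M)"
proof -
  have "ren (lift f) g M = ren (lift f) id (ren id g M)" by (simp add: ren_ren)
  moreover have "cons1 (ren f g V) \<circ> lift f = ren f g \<circ> cons1 V"
    by (rule nat_fun_eqI) simp_all
  ultimately show ?thesis by (simp add: ren_subst subst_ren)
qed

definition kfvS :: "(nat \<Rightarrow> trm) \<Rightarrow> nat set" where
  "kfvS \<sigma> = (\<Union>n. kfv (\<sigma> n))"

lemma kfvS_liftS: "kfvS (liftS \<sigma>) \<subseteq> kfvS \<sigma>"
  unfolding kfvS_def
proof
  fix x assume "x \<in> (\<Union>n. kfv (liftS \<sigma> n))"
  then obtain n where "x \<in> kfv (liftS \<sigma> n)" by blast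
  then show "x \<in> (\<Union>n. kfv (\<sigma> n))" by (cases n) (auto simp: kfv_ren)
qed

lemma kfvS_kshift: "kfvS (\<lambda>a. ren id Suc (\<sigma> a)) = Suc ` kfvS \<sigma>"
  unfolding kfvS_def by (auto simp: kfv_ren)

lemma kfv_subst:
  "kfv (subst \<sigma> M) \<subseteq> kfv M \<union> kfvS \<sigma> \<and> kfv M \<subseteq> kfv (subst \<sigma> M)"
  "kfvJ (substJ \<sigma> J) \<subseteq> kfvJ J \<union> kfvS \<sigma> \<and> kfvJ J \<subseteq> kfvJ (substJ \<sigma> J)"
proof (induction M and J arbitrary: \<sigma> and \<sigma>)
  case (Var n)
  then show ?case by (auto simp: kfvS_def)
next
  case (Mu J)
  from Mu[of "ren id Suc \<circ> \<sigma>"] show ?case by (auto simp: kfvS_kshift comp_def)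
qed (use kfvS_liftS in fastforce)+

lemma ss_fresh:
  "c \<notin> kfv X \<Longrightarrow> ss P c X = X"
  "c \<notin> kfvJ J \<Longrightarrow> ssJ P c J = J"
  by (induction X and J arbitrary: P c and P c) auto

lemma kfv_ss:
  "kfv (ss P c X) \<subseteq> kfv X \<union> kfv P \<and> kfv X \<subseteq> kfv (ss P c X)"
  "kfvJ (ssJ P c J) \<subseteq> kfvJ J \<union> kfv P \<and> kfvJ J \<subseteq> kfvJ (ssJ P c J)"
proof (induction X and J arbitrary: P c and P c)
  case (Lam M)
  from Lam.IH[of "ren (lift Suc) id P" c] show ?case by (simp add: kfv_ren)
next
  case (App M N)
  from App.IH(1)[of P c] App.IH(2)[of P c] show ?case by auto
next
  case (Where L M)
  from Where.IH(1)[of "ren (lift Suc) id P" c] Where.IH(2)[of P c] show ?case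
    by (auto simp: kfv_ren)
next
  case (JWhere J M)
  from JWhere.IH(1)[of "ren (lift Suc) id P" c] JWhere.IH(2)[of P c] show ?case
    by (auto simp: kfv_ren)
next
  case (Mu J)
  from Mu[of "ren id Suc P" "Suc c"] show ?case by (auto simp: kfv_ren)
next
  case (Jmp l Q)
  from Jmp.IH[of P c] show ?case by (auto simp: kfv_ren)
qed auto

lemma ren_ss:
  "(\<And>l. g l = g c \<Longrightarrow> l = c) \<Longrightarrow>
    ren f g (ss P c X) = ss (ren (lift f) g P) (g c) (ren f g X)"
  "(\<And>l. g l = g c \<Longrightarrow> l = c) \<Longrightarrow>
    renJ f g (ssJ P c J) = ssJ (ren (lift f) g P) (g c) (renJ f g J)"
proof (induction X and J arbitrary: P c f g and P c f g)
  case (Mu J)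
  have "\<And>l. lift g l = lift g (Suc c) \<Longrightarrow> l = Suc c"
    using Mu(2) by (case_tac l) auto
  from Mu(1)[OF this] show ?case by (simp add: ren_lift_kshift[symmetric] ren_ren comp_def)
next
  case (Jmp l Q)
  then show ?case by auto
qed (simp_all add: ren_lift2_lift_Suc)

section \<open>Flattening of jumps and the congruence\<close>

fun jhead :: "jmp \<Rightarrow> nat" where
  "jhead (Jmp k M) = k"
| "jhead (JWhere J M) = jhead J"

fun jbody :: "jmp \<Rightarrow> trm" where
  "jbody (Jmp k M) = M"
| "jbody (JWhere J M) = Where (jbody J) M"

lemma jhead_renJ [simp]: "jhead (renJ f g J) = g (jhead J)"
  by (induction J arbitrary: f rule: jhead.induct) auto

lemma jbody_renJ [simp]: "jbody (renJ f g J) = ren f g (jbody J)"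
  by (induction J arbitrary: f rule: jhead.induct) auto

lemma jhead_substJ [simp]: "jhead (substJ \<sigma> J) = jhead J"
  by (induction J arbitrary: \<sigma> rule: jhead.induct) auto

lemma jbody_substJ [simp]: "jbody (substJ \<sigma> J) = subst \<sigma> (jbody J)"
  by (induction J arbitrary: \<sigma> rule: jhead.induct) auto

lemma jhead_ssJ [simp]: "jhead (ssJ P c J) = jhead J"
  by (induction J arbitrary: P rule: jhead.induct) auto

lemma jbody_ssJ: "jhead J \<noteq> c \<Longrightarrow> jbody (ssJ P c J) = ss P c (jbody J)"
  by (induction J arbitrary: P rule: jhead.induct) auto

lemma kfvJ_jhead_jbody: "kfvJ J = insert (jhead J) (kfv (jbody J))"
  by (induction J rule: jhead.induct) auto

lemmas eqv_cong = eqv_eqvJ.c_lam eqv_eqvJ.c_app1 eqv_eqvJ.c_app2 eqv_eqvJ.c_wh1 eqv_eqvJ.c_wh2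
  eqv_eqvJ.c_mu eqv_eqvJ.c_jmp eqv_eqvJ.c_jwh1 eqv_eqvJ.c_jwh2

declare eqv_eqvJ.trans [trans] eqv_eqvJ.transJ [trans]

lemma eqvJ_flatten: "eqvJ J (Jmp (jhead J) (jbody J))"
proof (induction J rule: jhead.induct)
  case (1 k M)
  show ?case by (simp add: eqv_eqvJ.reflJ)
next
  case (2 J M)
  have "eqvJ (JWhere J M) (JWhere (Jmp (jhead J) (jbody J)) M)"
    using 2 by (rule eqv_eqvJ.c_jwh1)
  also have "eqvJ \<dots> (Jmp (jhead J) (Where (jbody J) M))"
    by (rule eqv_eqvJ.symJ) (rule eqv_eqvJ.E3)
  finally show ?case by simp
qed

lemma eqvJ_JWhere_flatten: "eqvJ (JWhere J X) (Jmp (jhead J) (Where (jbody J) X))"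
  using eqvJ_flatten[of "JWhere J X"] by simp

lemma eqvJ_imp_flat_eqv: "eqvJ J J' \<Longrightarrow> jhead J = jhead J' \<and> eqv (jbody J) (jbody J')"
proof (induction rule: eqv_eqvJ.inducts(2)[where ?P1.0 = "\<lambda>_ _. True"])
  case (transJ J J' J'')
  then show ?case by (metis eqv_eqvJ.trans)
qed (auto intro: eqv_cong eqv_eqvJ.refl eqv_eqvJ.sym)

lemma eqvJ_iff_flat: "eqvJ J J' \<longleftrightarrow> jhead J = jhead J' \<and> eqv (jbody J) (jbody J')"
  by (metis eqvJ_flatten eqvJ_imp_flat_eqv eqv_eqvJ.c_jmp eqv_eqvJ.symJ eqv_eqvJ.transJ)

lemma eqv_kfv:
  "eqv M N \<Longrightarrow> kfv M = kfv N"
  "eqvJ J J' \<Longrightarrow> kfvJ J = kfvJ J'"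
  by (induction rule: eqv_eqvJ.inducts) (auto simp: kfv_ren)

lemma eqv_ren:
  "eqv M N \<Longrightarrow> eqv (ren f g M) (ren f g N)"
  "eqvJ J J' \<Longrightarrow> eqvJ (renJ f g J) (renJ f g J')"
proof (induction arbitrary: f g and f g rule: eqv_eqvJ.inducts)
  case (E1 L M N)
  then show ?case using eqv_eqvJ.E1 by (simp add: ren_lift2_lift_Suc)
next
  case (E2 J M)
  then show ?case using eqv_eqvJ.E2 by (simp add: ren_lift_kshift)
next
  case (trans M N P) then show ?case by (metis eqv_eqvJ.trans)
next
  case (transJ M N P) then show ?case by (metis eqv_eqvJ.transJ)
qed (auto intro: eqv_cong eqv_eqvJ.refl eqv_eqvJ.sym eqv_eqvJ.symJ eqv_eqvJ.reflJ eqv_eqvJ.E3)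

lemma ssJ_eqvJ_flatten: "eqvJ (ssJ P c J) (ssJ P c (Jmp (jhead J) (jbody J)))"
proof (induction J arbitrary: P rule: jhead.induct)
  case (1 k M)
  then show ?case by (simp add: eqv_eqvJ.reflJ)
next
  case (2 J M)
  let ?P = "ren (lift Suc) id P"
  have IH: "eqvJ (ssJ ?P c J) (ssJ ?P c (Jmp (jhead J) (jbody J)))" by (rule 2)
  show ?case
  proof (cases "jhead J = c")
    case True
    have "eqvJ (ssJ P c (JWhere J M)) (JWhere (Jmp c (Where ?P (ss ?P c (jbody J)))) (ss P c M))"
      using IH True by (simp add: eqv_eqvJ.c_jwh1)
    also have "eqvJ \<dots> (Jmp c (Where (Where ?P (ss ?P c (jbody J))) (ss P c M)))"
      by (rule eqv_eqvJ.symJ) (rule eqv_eqvJ.E3)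
    also have "eqvJ \<dots> (Jmp c (Where P (Where (ss ?P c (jbody J)) (ss P c M))))"
      by (rule eqv_eqvJ.c_jmp) (rule eqv_eqvJ.sym, rule eqv_eqvJ.E1)
    finally show ?thesis using True by simp
  next
    case False
    have "eqvJ (ssJ P c (JWhere J M)) (JWhere (Jmp (jhead J) (ss ?P c (jbody J))) (ss P c M))"
      using IH False by (simp add: eqv_eqvJ.c_jwh1)
    also have "eqvJ \<dots> (Jmp (jhead J) (Where (ss ?P c (jbody J)) (ss P c M)))"
      by (rule eqv_eqvJ.symJ) (rule eqv_eqvJ.E3)
    finally show ?thesis using False by simp
  qed
qed

section \<open>Reduction in the CCV \<open>\<lambda>\<mu>\<close>-calculus\<close>

abbreviation ccv1 :: "trm \<Rightarrow> trm \<Rightarrow> bool" where "ccv1 \<equiv> cstep top_t top_j"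
abbreviation ccv1J :: "jmp \<Rightarrow> jmp \<Rightarrow> bool" where "ccv1J \<equiv> cstepJ top_t top_j"

lemma top_t_ren: "top_t M N \<Longrightarrow> top_t (ren f g M) (ren f g N)"
proof (induction rule: top_t.induct)
  case (ad1 N M)
  then show ?case using top_t.ad1[of "ren f g N" "ren f g M"] by (simp add: ren_lift_shift)
next
  case (ad2 V N)
  then show ?case using top_t.ad2[of "ren f g V" "ren f g N"] by (simp add: ren_lift_shift)
next
  case (beta_lam V M)
  then show ?case using top_t.beta_lam[of "ren f g V"] by simp
next
  case (beta_let V M)
  then show ?case using top_t.beta_let[of "ren f g V"] by (simp add: ren_subst_cons1)
next
  case (beta_mu M J)
  have "renJ f (lift g) (ssJ (ren id Suc M) 0 J) =
        ssJ (ren (lift f) (lift g) (ren id Suc M)) (lift g 0) (renJ f (lift g) J)"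
    by (rule ren_ss) (case_tac l, auto)
  then show ?case using top_t.beta_mu[of "ren (lift f) g M" "renJ f (lift g) J"]
    by (simp add: ren_lift_kshift)
next
  case (eta_lam V)
  then show ?case using top_t.eta_lam[of "ren f g V"] by (simp add: ren_lift_shift)
next
  case (eta_let M)
  then show ?case using top_t.eta_let[of "ren f g M"] by simp
next
  case (eta_mu M)
  then show ?case using top_t.eta_mu[of "ren f g M"] by (simp add: ren_lift_kshift)
qed

lemma top_j_ren: "top_j J J' \<Longrightarrow> top_j (renJ f g J) (renJ f g J')"
proof (induction rule: top_j.induct)
  case (beta_jmp l J)
  have "kcons (g l) \<circ> lift g = g \<circ> kcons l" by (rule nat_fun_eqI) auto
  then show ?case using top_j.beta_jmp[of "g l" "renJ f (lift g) J"] by (simp add: ren_ren)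
qed

lemma ccv1_ren:
  "ccv1 M N \<Longrightarrow> ccv1 (ren f g M) (ren f g N)"
  "ccv1J J J' \<Longrightarrow> ccv1J (renJ f g J) (renJ f g J')"
  by (induction arbitrary: f g and f g rule: cstep_cstepJ.inducts)
     (auto intro: cstep_cstepJ.intros top_t_ren top_j_ren)

lemma top_t_kfv: "top_t M N \<Longrightarrow> kfv N \<subseteq> kfv M"
proof (induction rule: top_t.induct)
  case (beta_let V M)
  have "kfv (subst (cons1 V) M) \<subseteq> kfv M \<union> kfvS (cons1 V)" by (rule kfv_subst(1)[THEN conjunct1])
  moreover have "kfvS (cons1 V) \<subseteq> kfv V" by (auto simp: kfvS_def cons1_def split: nat.splits)
  ultimately show ?case by auto
next
  case (beta_mu M J)
  then show ?case using kfv_ss(2)[of "ren id Suc M" 0 J] by (auto simp: kfv_ren)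
qed (auto simp: kfv_ren)

lemma top_j_kfv: "top_j J J' \<Longrightarrow> kfvJ J' \<subseteq> kfvJ J"
proof (induction rule: top_j.induct)
  case (beta_jmp l J)
  show ?case
  proof
    fix x assume "x \<in> kfvJ (renJ id (kcons l) J)"
    then obtain y where "y \<in> kfvJ J" "x = kcons l y" by (auto simp: kfv_ren)
    then show "x \<in> kfvJ (Jmp l (Mu J))" by (cases y) auto
  qed
qed

lemma ccv1_kfv:
  "ccv1 M N \<Longrightarrow> kfv N \<subseteq> kfv M"
  "ccv1J J J' \<Longrightarrow> kfvJ J' \<subseteq> kfvJ J"
  by (induction rule: cstep_cstepJ.inducts) (auto dest: top_t_kfv top_j_kfv)

definition ccv_stepJ :: "jmp \<Rightarrow> jmp \<Rightarrow> bool" where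
  "ccv_stepJ J J' \<longleftrightarrow> (\<exists>A B. eqvJ J A \<and> ccv1J A B \<and> eqvJ B J')"

definition ccv_redJ :: "jmp \<Rightarrow> jmp \<Rightarrow> bool" where
  "ccv_redJ = (\<lambda>A B. eqvJ A B \<or> ccv_stepJ A B)\<^sup>*\<^sup>*"

lemma ccv_red_refl [simp]: "ccv_red M M"
  and ccv_redJ_refl [simp]: "ccv_redJ J J"
  by (simp_all add: ccv_red_def ccv_redJ_def)

lemma ccv_red_trans [trans]: "ccv_red A B \<Longrightarrow> ccv_red B C \<Longrightarrow> ccv_red A C"
  and ccv_redJ_trans [trans]: "ccv_redJ A' B' \<Longrightarrow> ccv_redJ B' C' \<Longrightarrow> ccv_redJ A' C'"
  unfolding ccv_red_def ccv_redJ_def by (rule rtranclp_trans, assumption+)+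

lemma eqv_ccv_red: "eqv A B \<Longrightarrow> ccv_red A B"
  and eqvJ_ccv_redJ: "eqvJ A' B' \<Longrightarrow> ccv_redJ A' B'"
  unfolding ccv_red_def ccv_redJ_def by auto

lemma ccv1_ccv_red: "ccv1 A B \<Longrightarrow> ccv_red A B"
  and ccv1J_ccv_redJ: "ccv1J A' B' \<Longrightarrow> ccv_redJ A' B'"
  unfolding ccv_red_def ccv_step_def ccv_redJ_def ccv_stepJ_def
  by (blast intro: eqv_eqvJ.refl eqv_eqvJ.reflJ)+

lemma top_t_ccv_red: "top_t A B \<Longrightarrow> ccv_red A B"
  by (rule ccv1_ccv_red) (rule cstep_cstepJ.top)

lemma top_j_ccv_redJ: "top_j A B \<Longrightarrow> ccv_redJ A B"
  by (rule ccv1J_ccv_redJ) (rule cstep_cstepJ.topJ)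

lemma rtranclp_map:
  assumes "\<And>a b. R a b \<Longrightarrow> S (F a) (F b)"
  shows "R\<^sup>*\<^sup>* a b \<Longrightarrow> S\<^sup>*\<^sup>* (F a) (F b)"
  by (induction rule: rtranclp_induct) (auto intro: rtranclp.rtrancl_into_rtrancl assms)

lemma ccv_red_Lam: "ccv_red a b \<Longrightarrow> ccv_red (Lam a) (Lam b)"
  unfolding ccv_red_def ccv_redJ_def
  by (rule rtranclp_map[where F = "Lam"])
     (auto simp: ccv_step_def ccv_stepJ_def intro: cstep_cstepJ.intros eqv_cong)

lemma ccv_red_App1: "ccv_red a b \<Longrightarrow> ccv_red (App a c) (App b c)"
  unfolding ccv_red_def ccv_redJ_def
  by (rule rtranclp_map[where F = "\<lambda>x. App x c"])
     (auto simp: ccv_step_def ccv_stepJ_def intro: cstep_cstepJ.intros eqv_cong)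

lemma ccv_red_App2: "ccv_red a b \<Longrightarrow> ccv_red (App c a) (App c b)"
  unfolding ccv_red_def ccv_redJ_def
  by (rule rtranclp_map[where F = "App c"])
     (auto simp: ccv_step_def ccv_stepJ_def intro: cstep_cstepJ.intros eqv_cong)

lemma ccv_red_Where1: "ccv_red a b \<Longrightarrow> ccv_red (Where a c) (Where b c)"
  unfolding ccv_red_def ccv_redJ_def
  by (rule rtranclp_map[where F = "\<lambda>x. Where x c"])
     (auto simp: ccv_step_def ccv_stepJ_def intro: cstep_cstepJ.intros eqv_cong)

lemma ccv_red_Where2: "ccv_red a b \<Longrightarrow> ccv_red (Where c a) (Where c b)"
  unfolding ccv_red_def ccv_redJ_def
  by (rule rtranclp_map[where F = "Where c"])
     (auto simp: ccv_step_def ccv_stepJ_def intro: cstep_cstepJ.intros eqv_cong)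

lemma ccv_red_ren: "ccv_red a b \<Longrightarrow> ccv_red (ren f g a) (ren f g b)"
  unfolding ccv_red_def
  by (rule rtranclp_map[where F = "ren f g"])
     (auto simp: ccv_step_def intro: eqv_ren ccv1_ren)

lemma ccv_red_kunshift: "ccv_red A B \<Longrightarrow> ccv_red (kunshift A) (kunshift B)"
  unfolding kunshift_def by (rule ccv_red_ren)

lemma ccv_red_Mu: "ccv_redJ a b \<Longrightarrow> ccv_red (Mu a) (Mu b)"
  unfolding ccv_red_def ccv_redJ_def
  by (rule rtranclp_map[where F = "Mu"])
     (auto simp: ccv_step_def ccv_stepJ_def intro: cstep_cstepJ.intros eqv_cong)

lemma ccv_redJ_Jmp: "ccv_red a b \<Longrightarrow> ccv_redJ (Jmp k a) (Jmp k b)"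
  unfolding ccv_red_def ccv_redJ_def
  by (rule rtranclp_map[where F = "Jmp k"])
     (auto simp: ccv_step_def ccv_stepJ_def intro: cstep_cstepJ.intros eqv_cong)

lemma ccv_redJ_JWhere1: "ccv_redJ a b \<Longrightarrow> ccv_redJ (JWhere a c) (JWhere b c)"
  unfolding ccv_red_def ccv_redJ_def
  by (rule rtranclp_map[where F = "\<lambda>x. JWhere x c"])
     (auto simp: ccv_step_def ccv_stepJ_def intro: cstep_cstepJ.intros eqv_cong)

lemma ccv_redJ_JWhere2: "ccv_red a b \<Longrightarrow> ccv_redJ (JWhere c a) (JWhere c b)"
  unfolding ccv_red_def ccv_redJ_def
  by (rule rtranclp_map[where F = "JWhere c"])
     (auto simp: ccv_step_def ccv_stepJ_def intro: cstep_cstepJ.intros eqv_cong)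

lemma ccv_red_kfv: "ccv_red A B \<Longrightarrow> kfv B \<subseteq> kfv A"
  unfolding ccv_red_def
proof (induction rule: rtranclp_induct)
  case (step y z)
  from step(2) have "kfv z \<subseteq> kfv y"
  proof
    assume "eqv y z" then show ?thesis by (simp add: eqv_kfv)
  next
    assume "ccv_step y z"
    then obtain A B where "eqv y A" "ccv1 A B" "eqv B z" by (auto simp: ccv_step_def)
    then show ?thesis by (metis ccv1_kfv(1) eqv_kfv(1))
  qed
  with step(3) show ?case by blast
qed simp

section \<open>The vertical normal form\<close>

text \<open>Modulo (E3), \<open>\<mu>k.J\<close> is an \<open>\<eta>\<^sub>\<mu>\<close>-redex iff the flattening of \<open>J\<close> is \<open>[k]M\<close> with \<open>k\<close> not free
  in \<open>M\<close>; \<open>vnf\<close> contracts such redexes innermost first.\<close>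
definition eta_mu_redex :: "jmp \<Rightarrow> bool" where
  "eta_mu_redex J \<longleftrightarrow> jhead J = 0 \<and> 0 \<notin> kfv (jbody J)"

definition mu_vnf :: "jmp \<Rightarrow> trm" where
  "mu_vnf J = (if eta_mu_redex J then kunshift (jbody J) else Mu J)"

fun vnf :: "trm \<Rightarrow> trm" and vnfJ :: "jmp \<Rightarrow> jmp" where
  "vnf (Var n) = Var n"
| "vnf (Lam M) = Lam (vnf M)"
| "vnf (App M N) = App (vnf M) (vnf N)"
| "vnf (Where L M) = Where (vnf L) (vnf M)"
| "vnf (Mu J) = mu_vnf (vnfJ J)"
| "vnfJ (Jmp k M) = Jmp k (vnf M)"
| "vnfJ (JWhere J M) = JWhere (vnfJ J) (vnf M)"

lemma jhead_vnfJ [simp]: "jhead (vnfJ J) = jhead J"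
  and jbody_vnfJ [simp]: "jbody (vnfJ J) = vnf (jbody J)"
  by (induction J rule: jhead.induct) auto

lemma mu_vnf_Jmp0: "0 \<notin> kfv L \<Longrightarrow> mu_vnf (Jmp 0 L) = kunshift L"
  by (simp add: mu_vnf_def eta_mu_redex_def)

lemma kfv_mu_vnf [simp]: "kfv (mu_vnf J) = kfv (Mu J)"
  by (auto simp: mu_vnf_def eta_mu_redex_def kfv_kunshift kfvJ_jhead_jbody[of J])

lemma kfv_vnf [simp]: "kfv (vnf M) = kfv M" "kfvJ (vnfJ J) = kfvJ J"
  by (induction M and J) simp_all

lemma is_val_vnf [simp]: "is_val V \<Longrightarrow> is_val (vnf V)"
  by (cases V) auto

lemma eta_mu_redex_renJ: "eta_mu_redex (renJ f (lift g) J) = eta_mu_redex J"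
  unfolding eta_mu_redex_def by (auto simp: kfv_ren lift_def split: nat.splits)

lemma mu_vnf_ren: "mu_vnf (renJ f (lift g) J) = ren f g (mu_vnf J)"
proof (cases "eta_mu_redex J")
  case True
  then have "0 \<notin> kfv (jbody J)" by (simp add: eta_mu_redex_def)
  then have "jbody (renJ f (lift g) J) = ren id Suc (ren f g (kunshift (jbody J)))"
    by (metis jbody_renJ kshift_kunshift ren_lift_kshift)
  then show ?thesis using True by (simp add: mu_vnf_def eta_mu_redex_renJ)
qed (simp add: mu_vnf_def eta_mu_redex_renJ)

lemma vnf_ren: "vnf (ren f g M) = ren f g (vnf M)" "vnfJ (renJ f g J) = renJ f g (vnfJ J)"
  by (induction M and J arbitrary: f g and f g) (auto simp: mu_vnf_ren)

lemma vnf_idem [simp]: "vnf (vnf M) = vnf M" "vnfJ (vnfJ J) = vnfJ J"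
proof (induction M and J)
  case (Mu J)
  then have "vnf (jbody (vnfJ J)) = jbody (vnfJ J)" by (metis jbody_vnfJ)
  with Mu show ?case
    by (cases "eta_mu_redex (vnfJ J)") (simp_all add: mu_vnf_def kunshift_def vnf_ren)
qed simp_all

lemma eta_mu_redex_substJ: "eta_mu_redex (substJ (\<lambda>a. ren id Suc (\<rho> a)) J) = eta_mu_redex J"
proof -
  have "0 \<notin> kfvS (\<lambda>a. ren id Suc (\<rho> a))" by (auto simp: kfvS_kshift)
  then show ?thesis
    unfolding eta_mu_redex_def using kfv_subst(1)[of "\<lambda>a. ren id Suc (\<rho> a)" "jbody J"]
    by auto
qed

lemma mu_vnf_subst: "mu_vnf (substJ (\<lambda>a. ren id Suc (\<rho> a)) J) = subst \<rho> (mu_vnf J)"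
proof (cases "eta_mu_redex J")
  case True
  then have "0 \<notin> kfv (jbody J)" by (simp add: eta_mu_redex_def)
  then have "subst (\<lambda>a. ren id Suc (\<rho> a)) (jbody J) = ren id Suc (subst \<rho> (kunshift (jbody J)))"
    using ren_subst(1)[of id Suc \<rho> "kunshift (jbody J)"] by (simp add: comp_def kshift_kunshift)
  then show ?thesis using True by (simp add: mu_vnf_def eta_mu_redex_substJ)
qed (simp add: mu_vnf_def eta_mu_redex_substJ comp_def)

lemma vnf_comp_liftS: "vnf \<circ> liftS \<sigma> = liftS (vnf \<circ> \<sigma>)"
  by (rule nat_fun_eqI) (simp_all add: vnf_ren)

lemma vnf_subst:
  "vnf (subst \<sigma> M) = subst (vnf \<circ> \<sigma>) (vnf M)"
  "vnfJ (substJ \<sigma> J) = substJ (vnf \<circ> \<sigma>) (vnfJ J)"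
proof (induction M and J arbitrary: \<sigma> and \<sigma>)
  case (Mu J)
  then show ?case using mu_vnf_subst[of "vnf \<circ> \<sigma>" "vnfJ J"] by (simp add: comp_def vnf_ren)
qed (simp_all add: vnf_comp_liftS)

lemma eta_mu_redex_ssJ: "eta_mu_redex (ssJ (ren id Suc P) (Suc c) J) = eta_mu_redex J"
  unfolding eta_mu_redex_def using kfv_ss(1)[of "ren id Suc P" "Suc c" "jbody J"]
  by (auto simp: jbody_ssJ kfv_ren)

lemma mu_vnf_ss: "mu_vnf (ssJ (ren id Suc P) (Suc c) J) = ss P c (mu_vnf J)"
proof (cases "eta_mu_redex J")
  case True
  then have z: "0 \<notin> kfv (jbody J)" and h: "jhead J = 0" by (auto simp: eta_mu_redex_def)
  have "ss (ren id Suc P) (Suc c) (jbody J) = ren id Suc (ss P c (kunshift (jbody J)))"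
    using kshift_kunshift[OF z] ren_ss(1)[of Suc c id P "kunshift (jbody J)"] by simp
  then show ?thesis using True h by (simp add: mu_vnf_def eta_mu_redex_ssJ jbody_ssJ)
qed (simp add: mu_vnf_def eta_mu_redex_ssJ)

lemma vnf_ss: "vnf (ss P c X) = ss (vnf P) c (vnf X)" "vnfJ (ssJ P c J) = ssJ (vnf P) c (vnfJ J)"
proof (induction X and J arbitrary: P c and P c)
  case (Mu J)
  then show ?case using mu_vnf_ss[of "vnf P" c "vnfJ J"] by (simp add: vnf_ren)
qed (simp_all add: vnf_ren)

lemma mu_vnf_eqvJ: "eqvJ A B \<Longrightarrow> eqv (mu_vnf A) (mu_vnf B)"
proof -
  assume e: "eqvJ A B"
  then have h: "jhead A = jhead B" and b: "eqv (jbody A) (jbody B)" by (auto simp: eqvJ_iff_flat)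
  then have "eta_mu_redex A \<longleftrightarrow> eta_mu_redex B" by (simp add: eta_mu_redex_def eqv_kfv)
  then show ?thesis
    using e b by (simp add: mu_vnf_def kunshift_def eqv_ren eqv_eqvJ.c_mu)
qed

lemma eta_mu_redex_JWhere: "eta_mu_redex (JWhere J (ren id Suc M)) = eta_mu_redex J"
  unfolding eta_mu_redex_def by (auto simp: kfv_ren)

lemma mu_vnf_E2: "eqv (Where (mu_vnf J) M) (mu_vnf (JWhere J (ren id Suc M)))"
  by (simp add: mu_vnf_def eta_mu_redex_JWhere kunshift_Where eqv_eqvJ.refl eqv_eqvJ.E2)

lemma vnf_eqv:
  "eqv M N \<Longrightarrow> eqv (vnf M) (vnf N)"
  "eqvJ J J' \<Longrightarrow> eqvJ (vnfJ J) (vnfJ J')"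
proof (induction rule: eqv_eqvJ.inducts)
  case (E1 L M N)
  then show ?case using eqv_eqvJ.E1 by (simp add: vnf_ren)
next
  case (E2 J M)
  then show ?case using mu_vnf_E2 by (simp add: vnf_ren)
next
  case (trans M N P) then show ?case by (metis eqv_eqvJ.trans)
next
  case (transJ M N P) then show ?case by (metis eqv_eqvJ.transJ)
qed (auto intro: eqv_cong mu_vnf_eqvJ eqv_eqvJ.refl eqv_eqvJ.sym eqv_eqvJ.symJ eqv_eqvJ.reflJ
       eqv_eqvJ.E3)

abbreviation vert1 :: "trm \<Rightarrow> trm \<Rightarrow> bool" where "vert1 \<equiv> cstep vert_t (\<lambda>_ _. False)"
abbreviation vert1J :: "jmp \<Rightarrow> jmp \<Rightarrow> bool" where "vert1J \<equiv> cstepJ vert_t (\<lambda>_ _. False)"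

definition vstepJ :: "jmp \<Rightarrow> jmp \<Rightarrow> bool" where
  "vstepJ J J' \<longleftrightarrow> (\<exists>A B. eqvJ J A \<and> vert1J A B \<and> eqvJ B J')"

lemma vnf_vert1:
  "vert1 M N \<Longrightarrow> eqv (vnf M) (vnf N)"
  "vert1J J J' \<Longrightarrow> eqvJ (vnfJ J) (vnfJ J')"
proof (induction rule: cstep_cstepJ.inducts)
  case (top M N)
  then show ?case
    by (cases rule: vert_t.cases) (simp add: vnf_ren mu_vnf_def eta_mu_redex_def kfv_ren eqv_eqvJ.refl)
qed (auto intro: eqv_cong mu_vnf_eqvJ)

lemma eqv_Mu_eta_mu_redex:
  "eta_mu_redex J \<Longrightarrow> eqv (Mu J) (Mu (Jmp 0 (ren id Suc (kunshift (jbody J)))))"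
  using eqvJ_flatten[of J]
  by (simp add: eta_mu_redex_def kshift_kunshift eqv_eqvJ.c_mu)

lemma vnf_fixed_or_vstep:
  "vnf M = M \<or> (\<exists>Q. vstep M Q)"
  "vnfJ J = J \<or> (\<exists>Q. vstepJ J Q)"
proof (induction M and J)
  case (Mu J)
  show ?case
  proof (cases "vnfJ J = J \<and> eta_mu_redex J")
    case True
    have "vert1 (Mu (Jmp 0 (ren id Suc (kunshift (jbody J))))) (kunshift (jbody J))"
      by (rule cstep_cstepJ.top) (rule vert_t.intros)
    then have "vstep (Mu J) (kunshift (jbody J))"
      using eqv_Mu_eta_mu_redex True unfolding vstep_def by (blast intro: eqv_eqvJ.refl)
    then show ?thesis by blast
  next
    case False
    with Mu show ?thesis unfolding vstep_def vstepJ_def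
      by (auto simp: mu_vnf_def intro: eqv_cong cstep_cstepJ.intros)
  qed
qed (auto simp: vstep_def vstepJ_def intro: eqv_cong cstep_cstepJ.intros)

lemma ccv_red_mu_vnf: "ccv_red (Mu J) (mu_vnf J)"
proof (cases "eta_mu_redex J")
  case True
  then have "ccv_red (Mu J) (Mu (Jmp 0 (ren id Suc (kunshift (jbody J)))))"
    by (intro eqv_ccv_red eqv_Mu_eta_mu_redex)
  also have "ccv_red \<dots> (kunshift (jbody J))" by (rule top_t_ccv_red) (rule top_t.eta_mu)
  finally show ?thesis using True by (simp add: mu_vnf_def)
qed (simp add: mu_vnf_def)

lemma ccv_red_vnf: "ccv_red M (vnf M)" "ccv_redJ J (vnfJ J)"
proof (induction M and J)
  case (App M N) then show ?case by (metis ccv_red_App1 ccv_red_App2 ccv_red_trans vnf.simps(3))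
next
  case (Where M N) then show ?case by (metis ccv_red_Where1 ccv_red_Where2 ccv_red_trans vnf.simps(4))
next
  case (Mu J) then show ?case by (metis ccv_red_Mu ccv_red_mu_vnf ccv_red_trans vnf.simps(5))
next
  case (JWhere J M)
  then show ?case by (metis ccv_redJ_JWhere1 ccv_redJ_JWhere2 ccv_redJ_trans vnfJ.simps(2))
qed (simp_all add: ccv_red_Lam ccv_redJ_Jmp)

lemma vert_nf_eqv_vnf: "vert_nf X P \<Longrightarrow> eqv P (vnf X)"
proof -
  assume "vert_nf X P"
  then have r: "(\<lambda>A B. eqv A B \<or> vstep A B)\<^sup>*\<^sup>* X P" and n: "\<not> (\<exists>Q. vstep P Q)"
    by (auto simp: vert_nf_def)
  from r have "eqv (vnf X) (vnf P)"
  proof (induction rule: rtranclp_induct)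
    case base then show ?case by (rule eqv_eqvJ.refl)
  next
    case (step y z)
    from step(2) have "eqv (vnf y) (vnf z)"
      unfolding vstep_def by (metis eqv_eqvJ.trans vnf_eqv(1) vnf_vert1(1))
    with step(3) show ?case by (rule eqv_eqvJ.trans)
  qed
  moreover have "vnf P = P" using vnf_fixed_or_vstep(1)[of P] n by blast
  ultimately show ?thesis by (metis eqv_eqvJ.sym)
qed

inductive_cases ccv1J_JmpE: "ccv1J (Jmp k M) J2"
inductive_cases ccv1J_JWhereE: "ccv1J (JWhere J M) J2"
inductive_cases top_j_JmpE: "top_j (Jmp k M) J2"

lemma kunshift_Mu: "0 \<notin> kfv (Mu J) \<Longrightarrow> kunshift (Mu J) = Mu (renJ id (kcons 0) J)"
proof -
  assume z: "0 \<notin> kfv (Mu J)"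
  have "renJ id (lift (\<lambda>n. n - 1)) J = renJ id (kcons 0) J"
  proof (rule ren_cong(2))
    fix k assume "k \<in> kfvJ J"
    with z have "k \<noteq> 1" by auto
    then show "lift (\<lambda>n. n - 1) k = kcons 0 k"
      by (cases k) (auto simp: lift_def kcons_def split: nat.splits)
  qed
  then show ?thesis by (simp add: kunshift_def)
qed

text \<open>A step inside an \<open>\<eta>\<^sub>\<mu>\<close>-redex \<open>\<mu>k.J\<close> either stays inside its body, or it is the
  \<open>\<beta>\<^sub>j\<^sub>m\<^sub>p\<close>-step at its head \<open>[k]\<mu>l.J'\<close>; then the \<open>\<eta>\<^sub>\<mu>\<close>-contractum is already congruent to the
  result of that step.\<close>
lemma ccv1J_eta_mu_redex:
  "ccv1J J1 J2 \<Longrightarrow> eta_mu_redex J1 \<Longrightarrow>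
    (jhead J2 = 0 \<and> ccv1 (jbody J1) (jbody J2)) \<or> eqv (kunshift (jbody J1)) (Mu J2)"
  unfolding eta_mu_redex_def
proof (induction J1 arbitrary: J2 rule: jhead.induct)
  case (1 k M)
  from 1(1) consider (top) J3 where "M = Mu J3" "J2 = renJ id (kcons k) J3"
    | (inner) M' where "J2 = Jmp k M'" "ccv1 M M'"
    by (cases rule: ccv1J_JmpE) (auto elim: top_j_JmpE)
  then show ?case
    by cases (use 1 kunshift_Mu in \<open>auto intro: eqv_eqvJ.refl\<close>)
next
  case (2 J M)
  have z: "jhead J = 0" "0 \<notin> kfv (jbody J)" "0 \<notin> kfv M" using 2(3) by auto
  from 2(2) consider (jbody) J' where "J2 = JWhere J' M" "ccv1J J J'"
    | (arg) M' where "J2 = JWhere J M'" "ccv1 M M'"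
    by (cases rule: ccv1J_JWhereE) (auto elim: top_j.cases)
  then show ?case
  proof cases
    case jbody
    from 2(1)[OF jbody(2)] z
    consider "jhead J' = 0 \<and> ccv1 (jbody J) (jbody J')" | "eqv (kunshift (jbody J)) (Mu J')"
      by blast
    then show ?thesis
    proof cases
      case 1
      then show ?thesis using jbody by (auto intro: cstep_cstepJ.s_wh1)
    next
      case 2
      then have "eqv (kunshift (jbody (JWhere J M))) (Where (Mu J') (kunshift M))"
        by (simp add: kunshift_Where eqv_eqvJ.c_wh1)
      also have "eqv \<dots> (Mu (JWhere J' M))"
        using eqv_eqvJ.E2[of J' "kunshift M"] by (simp add: kshift_kunshift z(3))
      finally show ?thesis using jbody by simp
    qed
  next
    case arg
    then show ?thesis using 2 by (auto intro: cstep_cstepJ.s_wh2)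
  qed
qed

lemma mu_vnf_ccv_stepJ: "ccv_stepJ J1 J2 \<Longrightarrow> ccv_red (mu_vnf J1) (mu_vnf J2)"
proof -
  assume "ccv_stepJ J1 J2"
  then obtain A B where eA: "eqvJ J1 A" and s: "ccv1J A B" and eB: "eqvJ B J2"
    by (auto simp: ccv_stepJ_def)
  have "ccv_red (mu_vnf A) (mu_vnf B)"
  proof (cases "eta_mu_redex A")
    case False
    then have "ccv_red (mu_vnf A) (Mu B)"
      using s by (simp add: mu_vnf_def ccv1_ccv_red cstep_cstepJ.s_mu)
    also have "ccv_red (Mu B) (mu_vnf B)" by (rule ccv_red_mu_vnf)
    finally show ?thesis .
  next
    case True
    from ccv1J_eta_mu_redex[OF s True] show ?thesis
    proof
      assume a: "jhead B = 0 \<and> ccv1 (jbody A) (jbody B)"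
      with True have "eta_mu_redex B"
        using ccv1_kfv(1) by (fastforce simp: eta_mu_redex_def)
      then show ?thesis using True a by (simp add: mu_vnf_def kunshift_def ccv1_ccv_red ccv1_ren)
    next
      assume "eqv (kunshift (jbody A)) (Mu B)"
      then have "ccv_red (mu_vnf A) (Mu B)" using True by (simp add: mu_vnf_def eqv_ccv_red)
      also have "ccv_red (Mu B) (mu_vnf B)" by (rule ccv_red_mu_vnf)
      finally show ?thesis .
    qed
  qed
  then show ?thesis using mu_vnf_eqvJ[OF eA] mu_vnf_eqvJ[OF eB]
    by (meson ccv_red_trans eqv_ccv_red)
qed

lemma mu_vnf_ccv_redJ: "ccv_redJ J1 J2 \<Longrightarrow> ccv_red (mu_vnf J1) (mu_vnf J2)"
  unfolding ccv_redJ_def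
proof (induction rule: rtranclp_induct)
  case (step y z)
  from step(2) have "ccv_red (mu_vnf y) (mu_vnf z)"
    by (auto intro: mu_vnf_ccv_stepJ eqv_ccv_red mu_vnf_eqvJ)
  with step(3) show ?case by (rule ccv_red_trans)
qed simp

section \<open>The inverse translation commutes with renaming and substitution\<close>

lemma liftW_0 [simp]: "liftW \<sigma> 0 = WVar 0"
  and liftW_Suc [simp]: "liftW \<sigma> (Suc n) = renW Suc id (\<sigma> n)"
  by (simp_all add: liftW_def)

lemma liftK_0 [simp]: "liftK \<tau> 0 = KVar 0"
  and liftK_Suc [simp]: "liftK \<tau> (Suc n) = renK id Suc (\<tau> n)"
  by (simp_all add: liftK_def)

lemma consW_0 [simp]: "consW W 0 = W"
  and consW_Suc [simp]: "consW W (Suc n) = WVar n"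
  by (simp_all add: consW_def)

lemma consK_0 [simp]: "consK K 0 = K"
  and consK_Suc [simp]: "consK K (Suc n) = KVar n"
  by (simp_all add: consK_def)

lemma liftW_WVar [simp]: "liftW WVar = WVar"
  and liftK_KVar [simp]: "liftK KVar = KVar"
  by (rule nat_fun_eqI, simp_all)+

lemma renT_renT:
  "renT f g (renT f' g' T) = renT (f \<circ> f') (g \<circ> g') T"
  "renQ f g (renQ f' g' Q) = renQ (f \<circ> f') (g \<circ> g') Q"
  "renW f g (renW f' g' W) = renW (f \<circ> f') (g \<circ> g') W"
  "renK f g (renK f' g' K) = renK (f \<circ> f') (g \<circ> g') K"
  by (induction T and Q and W and K arbitrary: f g f' g' and f g f' g' and f g f' g' and f g f' g')
     (simp_all add: lift_comp)

lemma subT_ren: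
  "subT (\<lambda>n. WVar (f n)) (\<lambda>n. KVar (g n)) T = renT f g T"
  "subQ (\<lambda>n. WVar (f n)) (\<lambda>n. KVar (g n)) Q = renQ f g Q"
  "subW (\<lambda>n. WVar (f n)) (\<lambda>n. KVar (g n)) W = renW f g W"
  "subK (\<lambda>n. WVar (f n)) (\<lambda>n. KVar (g n)) K = renK f g K"
proof (induction T and Q and W and K arbitrary: f g and f g and f g and f g)
  case (TLamK Q)
  have "liftK (\<lambda>n. KVar (g n)) = (\<lambda>n. KVar (lift g n))" by (rule nat_fun_eqI) simp_all
  then show ?case using TLamK[of f "lift g"] by (simp add: comp_def)
next
  case (WLam T)
  have "liftW (\<lambda>n. WVar (f n)) = (\<lambda>n. WVar (lift f n))" by (rule nat_fun_eqI) simp_all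
  then show ?case using WLam[of "lift f" g] by (simp add: comp_def)
next
  case (KLam Q)
  have "liftW (\<lambda>n. WVar (f n)) = (\<lambda>n. WVar (lift f n))" by (rule nat_fun_eqI) simp_all
  then show ?case using KLam[of "lift f" g] by (simp add: comp_def)
qed simp_all

lemma is_val_invW [simp]: "is_val (invW W)"
  by (cases W) auto

lemma inv_ren:
  "invT (renT f g T) = ren f g (invT T)"
  "invQ (renQ f g Q) = renJ f g (invQ Q)"
  "invW (renW f g W) = ren f g (invW W)"
  "invK (renK f g K) (ren f g M) = renJ f g (invK K M)"
  by (induction T and Q and W and K arbitrary: f g and f g and f g and f g M) auto

lemma invW_comp_liftW: "invW \<circ> liftW \<sigma> = liftS (invW \<circ> \<sigma>)"
  by (rule nat_fun_eqI) (simp_all add: inv_ren)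

lemma inv_subst:
  "invT (subT \<sigma> KVar T) = subst (invW \<circ> \<sigma>) (invT T)"
  "invQ (subQ \<sigma> KVar Q) = substJ (invW \<circ> \<sigma>) (invQ Q)"
  "invW (subW \<sigma> KVar W) = subst (invW \<circ> \<sigma>) (invW W)"
  "invK (subK \<sigma> KVar K) (subst (invW \<circ> \<sigma>) M) = substJ (invW \<circ> \<sigma>) (invK K M)"
proof (induction T and Q and W and K arbitrary: \<sigma> and \<sigma> and \<sigma> and \<sigma> M)
  case (TLamK Q)
  have "invW \<circ> (\<lambda>a. renW id Suc (\<sigma> a)) = (\<lambda>a. ren id Suc ((invW \<circ> \<sigma>) a))"
    by (rule ext) (simp add: inv_ren)
  then show ?case using TLamK[of "\<lambda>a. renW id Suc (\<sigma> a)"] by (simp add: comp_def)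
next
  case (WLam T)
  then show ?case using WLam[of "liftW \<sigma>"] invW_comp_liftW by (simp add: comp_def)
next
  case (KLam Q)
  then show ?case using KLam[of "liftW \<sigma>"] invW_comp_liftW by (simp add: comp_def)
qed (simp_all add: comp_def)

lemma invK_Where:
  "eqvJ (JWhere (invK (renK Suc id K) Y) Z) (invK K (Where Y Z))"
proof (cases K)
  case (KVar k)
  then show ?thesis by (simp add: eqv_eqvJ.symJ eqv_eqvJ.E3)
next
  case (KLam Q)
  let ?J = "invQ Q"
  have "eqvJ (JWhere (invK (renK Suc id K) Y) Z)
      (Jmp (jhead ?J) (Where (Where (ren (lift Suc) id (jbody ?J)) Y) Z))"
    using KLam eqvJ_JWhere_flatten[of "JWhere (renJ (lift Suc) id ?J) Y" Z] by (simp add: inv_ren)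
  also have "eqvJ \<dots> (Jmp (jhead ?J) (Where (jbody ?J) (Where Y Z)))"
    by (rule eqv_eqvJ.c_jmp, rule eqv_eqvJ.sym, rule eqv_eqvJ.E1)
  also have "eqvJ \<dots> (invK K (Where Y Z))"
    using KLam eqvJ_JWhere_flatten[of ?J "Where Y Z"] by (simp add: eqv_eqvJ.symJ)
  finally show ?thesis .
qed

text \<open>\<open>\<tau>\<close> renames continuation variables by \<open>h\<close>, except that \<open>c\<close> is sent to a continuation
  abstraction whose inverse flattens to \<open>[h c](P' where x := \<box>)\<close>, \<open>P'\<close> being \<open>P\<close> renamed by \<open>h\<close>.\<close>
definition ksubst_at :: "(nat \<Rightarrow> tK) \<Rightarrow> nat \<Rightarrow> (nat \<Rightarrow> nat) \<Rightarrow> trm \<Rightarrow> bool" where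
  "ksubst_at \<tau> c h P \<longleftrightarrow> (\<forall>n. n \<noteq> c \<longrightarrow> \<tau> n = KVar (h n)) \<and>
     (\<exists>Q. \<tau> c = KLam Q \<and> jhead (invQ Q) = h c \<and> jbody (invQ Q) = ren id h P)"

lemma ksubst_at_liftK:
  assumes "ksubst_at \<tau> c h P"
  shows "ksubst_at (liftK \<tau>) (Suc c) (lift h) (ren id Suc P)"
proof -
  obtain Q where Q: "\<tau> c = KLam Q" "jhead (invQ Q) = h c" "jbody (invQ Q) = ren id h P"
    using assms by (auto simp: ksubst_at_def)
  have "\<forall>n. n \<noteq> Suc c \<longrightarrow> liftK \<tau> n = KVar (lift h n)"
    using assms by (auto simp: ksubst_at_def liftK_def split: nat.split)
  moreover have "liftK \<tau> (Suc c) = KLam (renQ id Suc Q)"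
    and "jhead (invQ (renQ id Suc Q)) = lift h (Suc c)"
    and "jbody (invQ (renQ id Suc Q)) = ren id (lift h) (ren id Suc P)"
    using Q by (simp_all add: inv_ren ren_lift_kshift)
  ultimately show ?thesis unfolding ksubst_at_def by blast
qed

lemma ksubst_at_shift:
  assumes "ksubst_at \<tau> c h P"
  shows "ksubst_at (renK Suc id \<circ> \<tau>) c h (ren (lift Suc) id P)"
proof -
  obtain Q where Q: "\<tau> c = KLam Q" "jhead (invQ Q) = h c" "jbody (invQ Q) = ren id h P"
    using assms by (auto simp: ksubst_at_def)
  have "\<forall>n. n \<noteq> c \<longrightarrow> (renK Suc id \<circ> \<tau>) n = KVar (h n)"
    using assms by (simp add: ksubst_at_def)
  moreover have "(renK Suc id \<circ> \<tau>) c = KLam (renQ (lift Suc) id Q)"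
    and "jhead (invQ (renQ (lift Suc) id Q)) = h c"
    and "jbody (invQ (renQ (lift Suc) id Q)) = ren id h (ren (lift Suc) id P)"
    using Q by (simp_all add: inv_ren ren_ren)
  ultimately show ?thesis unfolding ksubst_at_def by blast
qed

text \<open>Substituting a continuation abstraction for a continuation variable in the target is
  reflected by the structural substitution \<open>J{[k]\<box> \<mapsto> [k](P where x := \<box>)}\<close> in the source.\<close>
lemma inv_subst_KLam:
  "ksubst_at \<tau> c h P \<Longrightarrow> eqv (invT (subT WVar \<tau> T)) (ren id h (ss P c (invT T)))"
  "ksubst_at \<tau> c h P \<Longrightarrow> eqvJ (invQ (subQ WVar \<tau> Q)) (renJ id h (ssJ P c (invQ Q)))"
  "ksubst_at \<tau> c h P \<Longrightarrow> eqv (invW (subW WVar \<tau> W)) (ren id h (ss P c (invW W)))"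
  "ksubst_at \<tau> c h P \<Longrightarrow> eqv X' (ren id h (ss P c X)) \<Longrightarrow>
     eqvJ (invK (subK WVar \<tau> K) X') (renJ id h (ssJ P c (invK K X)))"
proof (induction T and Q and W and K arbitrary: \<tau> c h P and \<tau> c h P and \<tau> c h P and \<tau> c h P X X')
  case (TLamK Q)
  from TLamK(1)[OF ksubst_at_liftK[OF TLamK(2)]] show ?case
    by (simp add: comp_def id_def eqv_eqvJ.c_mu)
next
  case (TApp a b)
  then show ?case by simp (meson eqv_eqvJ.c_app1 eqv_eqvJ.c_app2 eqv_eqvJ.trans)
next
  case (WVar n)
  then show ?case by (simp add: eqv_eqvJ.refl)
next
  case (WLam T)
  from WLam(1)[OF ksubst_at_shift[OF WLam(2)]] show ?case
    by (simp add: comp_def id_def eqv_eqvJ.c_lam)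
next
  case (KVar n)
  show ?case
  proof (cases "n = c")
    case True
    with KVar(1) obtain Q where Q: "\<tau> c = KLam Q" "jhead (invQ Q) = h c"
      "jbody (invQ Q) = ren id h P"
      by (auto simp: ksubst_at_def)
    have "eqvJ (invK (KLam Q) X') (Jmp (h c) (Where (jbody (invQ Q)) X'))"
      using eqvJ_JWhere_flatten[of "invQ Q" X'] Q(2) by simp
    also have "eqvJ \<dots> (Jmp (h c) (Where (jbody (invQ Q)) (ren id h (ss P c X))))"
      using KVar(2) by (intro eqv_eqvJ.c_jmp eqv_eqvJ.c_wh2)
    finally show ?thesis using True Q by (simp add: id_def)
  next
    case False
    then show ?thesis using KVar by (simp add: ksubst_at_def eqv_eqvJ.c_jmp id_def)
  qed
next
  case (KLam Q)
  from KLam(1)[OF ksubst_at_shift[OF KLam(2)]] KLam(3) show ?case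
    by (simp add: comp_def id_def) (meson eqv_eqvJ.c_jwh1 eqv_eqvJ.c_jwh2 eqv_eqvJ.transJ)
qed simp_all

section \<open>Simulation of target reductions\<close>

lemma simulate_betaW:
  "ccv_red (vnf (invT (TApp (WLam T) W))) (vnf (invT (subT (consW W) KVar T)))"
proof -
  let ?A = "invT T" and ?V = "invW W"
  have "ccv_red (vnf (invT (TApp (WLam T) W))) (Where (vnf ?A) (vnf ?V))"
    by simp (rule top_t_ccv_red, rule top_t.beta_lam, simp)
  also have "ccv_red \<dots> (subst (cons1 (vnf ?V)) (vnf ?A))"
    by (rule top_t_ccv_red, rule top_t.beta_let, simp)
  also have "subst (cons1 (vnf ?V)) (vnf ?A) = vnf (invT (subT (consW W) KVar T))"
  proof -
    have "invW \<circ> consW W = cons1 ?V" "vnf \<circ> cons1 ?V = cons1 (vnf ?V)"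
      by (rule nat_fun_eqI, simp_all)+
    then show ?thesis by (simp add: inv_subst vnf_subst)
  qed
  finally show ?thesis .
qed

lemma simulate_betaQ:
  "ccv_redJ (vnfJ (invQ (QK (KLam Q) W))) (vnfJ (invQ (subQ (consW W) KVar Q)))"
proof -
  let ?J = "invQ Q" and ?V = "invW W"
  have "ccv_redJ (vnfJ (invQ (QK (KLam Q) W))) (Jmp (jhead ?J) (Where (vnf (jbody ?J)) (vnf ?V)))"
    using eqvJ_JWhere_flatten[of "vnfJ ?J" "vnf ?V"] by (simp add: eqvJ_ccv_redJ)
  also have "ccv_redJ \<dots> (Jmp (jhead ?J) (subst (cons1 (vnf ?V)) (vnf (jbody ?J))))"
    by (rule ccv_redJ_Jmp, rule top_t_ccv_red, rule top_t.beta_let, simp)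
  also have "ccv_redJ \<dots> (vnfJ (invQ (subQ (consW W) KVar Q)))"
  proof -
    have "invW \<circ> consW W = cons1 ?V" "vnf \<circ> cons1 ?V = cons1 (vnf ?V)"
      by (rule nat_fun_eqI, simp_all)+
    then have "vnfJ (invQ (subQ (consW W) KVar Q)) = substJ (cons1 (vnf ?V)) (vnfJ ?J)"
      by (simp add: inv_subst vnf_subst)
    then show ?thesis
      using eqvJ_flatten[of "substJ (cons1 (vnf ?V)) (vnfJ ?J)"]
      by (simp add: eqvJ_ccv_redJ eqv_eqvJ.symJ)
  qed
  finally show ?thesis .
qed

lemma simulate_betaK_KVar:
  "ccv_redJ (vnfJ (invQ (QT (TLamK Q) (KVar l)))) (vnfJ (invQ (subQ WVar (consK (KVar l)) Q)))"
proof -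
  let ?J = "vnfJ (invQ Q)"
  have c: "consK (KVar l) = (\<lambda>n. KVar (kcons l n))" by (rule nat_fun_eqI) simp_all
  have w: "WVar = (\<lambda>n. WVar (id n))" by simp
  have tgt: "vnfJ (invQ (subQ WVar (consK (KVar l)) Q)) = renJ id (kcons l) ?J"
    by (subst c, subst w, simp only: subT_ren inv_ren vnf_ren)
  show ?thesis
  proof (cases "eta_mu_redex ?J")
    case True
    then have "jhead ?J = 0" "0 \<notin> kfv (jbody ?J)" by (auto simp: eta_mu_redex_def)
    then have "eqvJ (renJ id (kcons l) ?J) (Jmp l (kunshift (jbody ?J)))"
      using eqv_ren(2)[OF eqvJ_flatten[of ?J], of id "kcons l"]
      by (simp add: ren_kcons_eq_kunshift)
    then show ?thesis using True unfolding tgt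
      by (simp add: mu_vnf_def eqvJ_ccv_redJ eqv_eqvJ.symJ)
  next
    case False
    then show ?thesis unfolding tgt
      by (simp add: mu_vnf_def top_j_ccv_redJ top_j.beta_jmp)
  qed
qed

lemma simulate_betaK_KLam:
  "ccv_redJ (vnfJ (invQ (QT (TLamK Q) (KLam Q')))) (vnfJ (invQ (subQ WVar (consK (KLam Q')) Q)))"
proof -
  let ?k = "jhead (invQ Q')" and ?L = "vnf (jbody (invQ Q'))" and ?J = "vnfJ (invQ Q)"
  let ?ss = "ssJ (ren id Suc ?L) 0 ?J"
  have "ksubst_at (consK (KLam Q')) 0 (kcons ?k) (ren id Suc (jbody (invQ Q')))"
    by (auto simp: ksubst_at_def consK_def split: nat.split)
  then have "eqvJ (invQ (subQ WVar (consK (KLam Q')) Q))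
      (renJ id (kcons ?k) (ssJ (ren id Suc (jbody (invQ Q'))) 0 (invQ Q)))"
    by (rule inv_subst_KLam(2))
  then have tgt: "eqvJ (vnfJ (invQ (subQ WVar (consK (KLam Q')) Q))) (renJ id (kcons ?k) ?ss)"
    by (metis vnf_eqv(2) vnf_ren(1,2) vnf_ss(2))
  have src: "eqvJ (vnfJ (invQ (QT (TLamK Q) (KLam Q')))) (Jmp ?k (Where ?L (mu_vnf ?J)))"
    using eqvJ_JWhere_flatten[of "vnfJ (invQ Q')" "mu_vnf ?J"] by simp
  show ?thesis
  proof (cases "eta_mu_redex ?J")
    case True
    then have z: "jhead ?J = 0" "0 \<notin> kfv (jbody ?J)" unfolding eta_mu_redex_def by blast+
    have "eqvJ (renJ id (kcons ?k) ?ss)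
        (renJ id (kcons ?k) (ssJ (ren id Suc ?L) 0 (Jmp 0 (jbody ?J))))"
      using eqv_ren(2)[OF ssJ_eqvJ_flatten[of "ren id Suc ?L" 0 ?J, unfolded z(1)]] .
    also have "renJ id (kcons ?k) (ssJ (ren id Suc ?L) 0 (Jmp 0 (jbody ?J)))
        = Jmp ?k (Where ?L (mu_vnf ?J))"
      using z True by (simp add: ss_fresh mu_vnf_def ren_kcons_eq_kunshift id_def[symmetric])
    finally show ?thesis
      using tgt src by (meson eqvJ_ccv_redJ eqv_eqvJ.symJ eqv_eqvJ.transJ)
  next
    case False
    have "ccv_redJ (vnfJ (invQ (QT (TLamK Q) (KLam Q')))) (Jmp ?k (Where ?L (Mu ?J)))"
      using src False by (simp add: mu_vnf_def eqvJ_ccv_redJ)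
    also have "ccv_redJ \<dots> (Jmp ?k (Mu ?ss))"
      by (rule ccv_redJ_Jmp, rule top_t_ccv_red, rule top_t.beta_mu)
    also have "ccv_redJ \<dots> (renJ id (kcons ?k) ?ss)"
      by (rule top_j_ccv_redJ, rule top_j.beta_jmp)
    also have "ccv_redJ \<dots> (vnfJ (invQ (subQ WVar (consK (KLam Q')) Q)))"
      using tgt by (simp add: eqvJ_ccv_redJ eqv_eqvJ.symJ)
    finally show ?thesis .
  qed
qed

lemma simulate_etaW: "ccv_red (vnf (invW (WLam (TApp (renW Suc id W) (WVar 0))))) (vnf (invW W))"
  by (simp add: inv_ren vnf_ren) (rule top_t_ccv_red, rule top_t.eta_lam, simp)

lemma simulate_etaT: "ccv_red (vnf (invT (TLamK (QT (renT id Suc T) (KVar 0))))) (vnf (invT T))"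
  by (simp add: inv_ren vnf_ren mu_vnf_def eta_mu_redex_def kfv_ren)

lemma simulate_etaK:
  "ccv_redJ (vnfJ (invK (KLam (QK (renK Suc id K) (WVar 0))) X)) (vnfJ (invK K X))"
proof (cases K)
  case (KVar k)
  have "ccv_redJ (vnfJ (invK (KLam (QK (renK Suc id K) (WVar 0))) X)) (Jmp k (Where (Var 0) (vnf X)))"
    using KVar by (simp add: eqvJ_ccv_redJ eqv_eqvJ.symJ eqv_eqvJ.E3)
  also have "ccv_redJ \<dots> (Jmp k (vnf X))"
    by (rule ccv_redJ_Jmp, rule top_t_ccv_red, rule top_t.eta_let)
  finally show ?thesis using KVar by simp
next
  case (KLam Q)
  let ?J = "vnfJ (invQ Q)"
  let ?k = "jhead ?J" and ?L = "jbody ?J"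
  have "ccv_redJ (vnfJ (invK (KLam (QK (renK Suc id K) (WVar 0))) X))
      (Jmp ?k (Where (Where (ren (lift Suc) id ?L) (Var 0)) (vnf X)))"
    using KLam eqvJ_JWhere_flatten[of "JWhere (renJ (lift Suc) id ?J) (Var 0)" "vnf X"]
    by (simp add: inv_ren vnf_ren eqvJ_ccv_redJ)
  also have "ccv_redJ \<dots> (Jmp ?k (Where (subst (cons1 (Var 0)) (ren (lift Suc) id ?L)) (vnf X)))"
    by (rule ccv_redJ_Jmp, rule ccv_red_Where1, rule top_t_ccv_red, rule top_t.beta_let, simp)
  also have "subst (cons1 (Var 0)) (ren (lift Suc) id ?L) = ?L"
  proof -
    have "cons1 (Var 0) \<circ> lift Suc = Var" by (rule nat_fun_eqI) simp_all
    then show ?thesis by (simp add: subst_ren)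
  qed
  also have "ccv_redJ (Jmp ?k (Where ?L (vnf X))) (vnfJ (invK K X))"
    using KLam eqvJ_JWhere_flatten[of ?J "vnf X"] by (simp add: eqvJ_ccv_redJ eqv_eqvJ.symJ)
  finally show ?thesis .
qed

lemma ccv_redJ_vnfJ_invK:
  "ccv_red (vnf M) (vnf M') \<Longrightarrow> ccv_redJ (vnfJ (invK K M)) (vnfJ (invK K M'))"
  by (cases K) (auto intro: ccv_redJ_Jmp ccv_redJ_JWhere2)

lemma simulate_step:
  "stT T T' \<Longrightarrow> ccv_red (vnf (invT T)) (vnf (invT T'))"
  "stQ Q Q' \<Longrightarrow> ccv_redJ (vnfJ (invQ Q)) (vnfJ (invQ Q'))"
  "stW W W' \<Longrightarrow> ccv_red (vnf (invW W)) (vnf (invW W'))"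
  "stK K K' \<Longrightarrow> ccv_redJ (vnfJ (invK K X)) (vnfJ (invK K' X))"
proof (induction arbitrary: and and and X rule: stT_stQ_stW_stK.inducts)
  case (betaK Q K)
  then show ?case by (cases K) (simp_all only: simulate_betaK_KVar simulate_betaK_KLam)
qed (rule simulate_betaW simulate_betaQ simulate_etaW simulate_etaT simulate_etaK
    | simp add: mu_vnf_ccv_redJ ccv_red_App1 ccv_red_App2 ccv_redJ_vnfJ_invK ccv_red_Lam ccv_redJ_JWhere1)+

lemma simulate_steps: "stT\<^sup>*\<^sup>* T T' \<Longrightarrow> ccv_red (vnf (invT T)) (vnf (invT T'))"
  by (induction rule: rtranclp_induct) (auto intro: ccv_red_trans simulate_step(1))

section \<open>A term reduces to the inverse of its CPS translation\<close>

lemma vnfJ_invK_cong: "eqv (vnf X) (vnf Y) \<Longrightarrow> eqvJ (vnfJ (invK K X)) (vnfJ (invK K Y))"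
  by (cases K) (auto intro: eqv_eqvJ.c_jmp eqv_eqvJ.c_jwh2)

lemma vnfJ_invK_Where:
  "eqvJ (JWhere (vnfJ (invK (renK Suc id K) Y)) (vnf Z)) (vnfJ (invK K (Where Y Z)))"
  using vnf_eqv(2)[OF invK_Where[of K Y Z]] by simp

lemma cps_val: "is_val V \<Longrightarrow> cps fx fk V K = QK K (star fx fk V)"
  by (cases V) auto

text \<open>The renamings \<open>fx\<close>, \<open>fk\<close> place the free variables of the source term in the context of its
  translation; quantifying over them and over the continuation \<open>K\<close> makes the induction on the
  source term go through.\<close>
definition cps_sim_val :: "trm \<Rightarrow> bool" where
  "cps_sim_val V \<longleftrightarrow>
     (\<forall>fx fk. \<exists>D. ccv_red (ren fx fk V) D \<and> eqv (vnf (invW (star fx fk V))) (vnf D))"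

definition cps_sim :: "trm \<Rightarrow> bool" where
  "cps_sim M \<longleftrightarrow>
     (\<forall>fx fk K. \<exists>D. ccv_red (ren fx fk M) D \<and> eqvJ (vnfJ (invQ (cps fx fk M K))) (vnfJ (invK K D)))"

definition cpsJ_sim :: "jmp \<Rightarrow> bool" where
  "cpsJ_sim J \<longleftrightarrow>
     (\<forall>fx fk. \<exists>D. ccv_redJ (renJ fx fk J) D \<and> eqvJ (vnfJ (invQ (cpsJ fx fk J))) (vnfJ D))"

lemma cps_sim_val_imp_cps_sim: "is_val V \<Longrightarrow> cps_sim_val V \<Longrightarrow> cps_sim V"
  unfolding cps_sim_val_def cps_sim_def by (metis cps_val invQ.simps(1) vnfJ_invK_cong)

lemma cps_sim_val_Var: "cps_sim_val (Var n)"
  unfolding cps_sim_val_def by (auto intro!: exI[of _ "Var _"] eqv_eqvJ.refl)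

lemma cps_sim_val_Lam: "cps_sim M \<Longrightarrow> cps_sim_val (Lam M)"
  unfolding cps_sim_val_def
proof (intro allI)
  fix fx fk
  assume "cps_sim M"
  then have "\<exists>D. ccv_red (ren (lift fx) (Suc \<circ> fk) M) D \<and>
      eqvJ (vnfJ (invQ (cps (lift fx) (Suc \<circ> fk) M (KVar 0)))) (vnfJ (invK (KVar 0) D))"
    unfolding cps_sim_def by blast
  then obtain D0 where r0: "ccv_red (ren (lift fx) (Suc \<circ> fk) M) D0"
    and e0: "eqvJ (vnfJ (invQ (cps (lift fx) (Suc \<circ> fk) M (KVar 0)))) (Jmp 0 (vnf D0))"
    by auto
  have sh: "ren (lift fx) (Suc \<circ> fk) M = ren id Suc (ren (lift fx) fk M)" by (simp add: ren_ren)
  then have "0 \<notin> kfv (vnf D0)" using ccv_red_kfv[OF r0] by (auto simp: kfv_ren)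
  then have "eqv (vnf (invW (star fx fk (Lam M)))) (Lam (kunshift (vnf D0)))"
    using mu_vnf_eqvJ[OF e0] by (simp add: mu_vnf_Jmp0 eqv_eqvJ.c_lam)
  moreover have "vnf (Lam (kunshift (vnf D0))) = Lam (kunshift (vnf D0))"
    by (simp add: kunshift_def vnf_ren)
  moreover have "ccv_red (kunshift (ren (lift fx) (Suc \<circ> fk) M)) (kunshift (vnf D0))"
    by (intro ccv_red_kunshift ccv_red_trans[OF r0 ccv_red_vnf(1)])
  then have "ccv_red (ren (lift fx) fk M) (kunshift (vnf D0))"
    using sh by simp
  ultimately show "\<exists>D. ccv_red (ren fx fk (Lam M)) D \<and> eqv (vnf (invW (star fx fk (Lam M)))) (vnf D)"
    by (metis ccv_red_Lam ren.simps(2))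
qed

lemma cps_sim_App_val_val:
  assumes "is_val A" "is_val B" "cps_sim_val A" "cps_sim_val B"
  shows "cps_sim (App A B)"
  unfolding cps_sim_def
proof (intro allI)
  fix fx fk K
  obtain DA DB where rA: "ccv_red (ren fx fk A) DA" and eA: "eqv (vnf (invW (star fx fk A))) (vnf DA)"
    and rB: "ccv_red (ren fx fk B) DB" and eB: "eqv (vnf (invW (star fx fk B))) (vnf DB)"
    using assms(3,4) unfolding cps_sim_val_def by blast
  have "eqv (vnf (App (invW (star fx fk A)) (invW (star fx fk B)))) (vnf (App DA DB))"
    using eA eB by simp (meson eqv_eqvJ.c_app1 eqv_eqvJ.c_app2 eqv_eqvJ.trans)
  then have "eqvJ (vnfJ (invQ (cps fx fk (App A B) K))) (vnfJ (invK K (App DA DB)))"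
    using assms(1,2) vnfJ_invK_cong by simp
  moreover have "ccv_red (ren fx fk (App A B)) (App DA DB)"
    using rA rB by (simp add: ccv_red_trans[OF ccv_red_App1 ccv_red_App2])
  ultimately show "\<exists>D. ccv_red (ren fx fk (App A B)) D \<and>
      eqvJ (vnfJ (invQ (cps fx fk (App A B) K))) (vnfJ (invK K D))"
    by blast
qed

lemma cps_sim_App_val_nonval:
  assumes "is_val A" "\<not> is_val B" "cps_sim_val A" "cps_sim B"
  shows "cps_sim (App A B)"
  unfolding cps_sim_def
proof (intro allI)
  fix fx fk K
  let ?K1 = "KLam (QT (TApp (star (Suc \<circ> fx) fk A) (WVar 0)) (renK Suc id K))"
  obtain DB where rB: "ccv_red (ren fx fk B) DB"
    and eB: "eqvJ (vnfJ (invQ (cps fx fk B ?K1))) (vnfJ (invK ?K1 DB))"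
    using assms(4) unfolding cps_sim_def by blast
  obtain DA where rA: "ccv_red (ren (Suc \<circ> fx) fk A) DA"
    and eA: "eqv (vnf (invW (star (Suc \<circ> fx) fk A))) (vnf DA)"
    using assms(3) unfolding cps_sim_val_def by blast
  have "eqvJ (vnfJ (invQ (cps fx fk (App A B) K))) (vnfJ (invK ?K1 DB))"
    using assms(1,2) eB by simp
  also have "vnfJ (invK ?K1 DB) =
      JWhere (vnfJ (invK (renK Suc id K) (App (invW (star (Suc \<circ> fx) fk A)) (Var 0)))) (vnf DB)"
    by simp
  also have "eqvJ \<dots> (JWhere (vnfJ (invK (renK Suc id K) (App DA (Var 0)))) (vnf DB))"
    by (rule eqv_eqvJ.c_jwh1, rule vnfJ_invK_cong) (simp add: eA eqv_eqvJ.c_app1)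
  also have "eqvJ \<dots> (vnfJ (invK K (Where (App DA (Var 0)) DB)))" by (rule vnfJ_invK_Where)
  finally have e: "eqvJ (vnfJ (invQ (cps fx fk (App A B) K))) (vnfJ (invK K (Where (App DA (Var 0)) DB)))" .
  have "ccv_red (ren fx fk (App A B)) (Where (App (ren Suc id (ren fx fk A)) (Var 0)) (ren fx fk B))"
    using assms(1,2) by simp (rule top_t_ccv_red, rule top_t.ad2, simp_all)
  also have "ccv_red \<dots> (Where (App DA (Var 0)) (ren fx fk B))"
    using rA by (simp add: ren_ren ccv_red_Where1 ccv_red_App1)
  also have "ccv_red \<dots> (Where (App DA (Var 0)) DB)" using rB by (rule ccv_red_Where2)
  finally show "\<exists>D. ccv_red (ren fx fk (App A B)) D \<and>
      eqvJ (vnfJ (invQ (cps fx fk (App A B) K))) (vnfJ (invK K D))"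
    using e by blast
qed

lemma cps_sim_App_nonval_val:
  assumes "\<not> is_val A" "is_val B" "cps_sim A" "cps_sim_val B"
  shows "cps_sim (App A B)"
  unfolding cps_sim_def
proof (intro allI)
  fix fx fk K
  let ?K1 = "KLam (QT (TApp (WVar 0) (star (Suc \<circ> fx) fk B)) (renK Suc id K))"
  obtain DA where rA: "ccv_red (ren fx fk A) DA"
    and eA: "eqvJ (vnfJ (invQ (cps fx fk A ?K1))) (vnfJ (invK ?K1 DA))"
    using assms(3) unfolding cps_sim_def by blast
  obtain DB where rB: "ccv_red (ren (Suc \<circ> fx) fk B) DB"
    and eB: "eqv (vnf (invW (star (Suc \<circ> fx) fk B))) (vnf DB)"
    using assms(4) unfolding cps_sim_val_def by blast
  have "eqvJ (vnfJ (invQ (cps fx fk (App A B) K))) (vnfJ (invK ?K1 DA))"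
    using assms(1,2) eA by simp
  also have "vnfJ (invK ?K1 DA) =
      JWhere (vnfJ (invK (renK Suc id K) (App (Var 0) (invW (star (Suc \<circ> fx) fk B))))) (vnf DA)"
    by simp
  also have "eqvJ \<dots> (JWhere (vnfJ (invK (renK Suc id K) (App (Var 0) DB))) (vnf DA))"
    by (rule eqv_eqvJ.c_jwh1, rule vnfJ_invK_cong) (simp add: eB eqv_eqvJ.c_app2)
  also have "eqvJ \<dots> (vnfJ (invK K (Where (App (Var 0) DB) DA)))" by (rule vnfJ_invK_Where)
  finally have e: "eqvJ (vnfJ (invQ (cps fx fk (App A B) K))) (vnfJ (invK K (Where (App (Var 0) DB) DA)))" .
  have "ccv_red (ren fx fk (App A B)) (Where (App (Var 0) (ren Suc id (ren fx fk B))) (ren fx fk A))"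
    using assms(1) by simp (rule top_t_ccv_red, rule top_t.ad1, simp)
  also have "ccv_red \<dots> (Where (App (Var 0) DB) (ren fx fk A))"
    using rB by (simp add: ren_ren ccv_red_Where1 ccv_red_App2)
  also have "ccv_red \<dots> (Where (App (Var 0) DB) DA)" using rA by (rule ccv_red_Where2)
  finally show "\<exists>D. ccv_red (ren fx fk (App A B)) D \<and>
      eqvJ (vnfJ (invQ (cps fx fk (App A B) K))) (vnfJ (invK K D))"
    using e by blast
qed

lemma cps_sim_App_nonval_nonval:
  assumes "\<not> is_val A" "\<not> is_val B" "cps_sim A" "cps_sim B"
  shows "cps_sim (App A B)"
  unfolding cps_sim_def
proof (intro allI)
  fix fx fk K
  let ?K2 = "KLam (QT (TApp (WVar 1) (WVar 0)) (renK (Suc \<circ> Suc) id K))"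
  let ?K1 = "KLam (cps (Suc \<circ> fx) fk B ?K2)"
  obtain DA where rA: "ccv_red (ren fx fk A) DA"
    and eA: "eqvJ (vnfJ (invQ (cps fx fk A ?K1))) (vnfJ (invK ?K1 DA))"
    using assms(3) unfolding cps_sim_def by blast
  obtain DB where rB: "ccv_red (ren (Suc \<circ> fx) fk B) DB"
    and eB: "eqvJ (vnfJ (invQ (cps (Suc \<circ> fx) fk B ?K2))) (vnfJ (invK ?K2 DB))"
    using assms(4) unfolding cps_sim_def by blast
  have "eqvJ (vnfJ (invQ (cps fx fk (App A B) K))) (vnfJ (invK ?K1 DA))"
    using assms(1,2) eA by simp
  also have "vnfJ (invK ?K1 DA) = JWhere (vnfJ (invQ (cps (Suc \<circ> fx) fk B ?K2))) (vnf DA)"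
    by simp
  also have "eqvJ \<dots> (JWhere (vnfJ (invK ?K2 DB)) (vnf DA))"
    using eB by (rule eqv_eqvJ.c_jwh1)
  also have "vnfJ (invK ?K2 DB) =
      JWhere (vnfJ (invK (renK Suc id (renK Suc id K)) (App (Var 1) (Var 0)))) (vnf DB)"
    by (simp add: renT_renT)
  also have "eqvJ (JWhere \<dots> (vnf DA))
      (JWhere (vnfJ (invK (renK Suc id K) (Where (App (Var 1) (Var 0)) DB))) (vnf DA))"
    by (rule eqv_eqvJ.c_jwh1, rule vnfJ_invK_Where)
  also have "eqvJ \<dots> (vnfJ (invK K (Where (Where (App (Var 1) (Var 0)) DB) DA)))"
    by (rule vnfJ_invK_Where)
  finally have e: "eqvJ (vnfJ (invQ (cps fx fk (App A B) K)))
      (vnfJ (invK K (Where (Where (App (Var 1) (Var 0)) DB) DA)))" .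
  have "ccv_red (ren fx fk (App A B)) (Where (App (Var 0) (ren Suc id (ren fx fk B))) (ren fx fk A))"
    using assms(1) by simp (rule top_t_ccv_red, rule top_t.ad1, simp)
  also have "ccv_red \<dots> (Where (Where (App (Var 1) (Var 0)) (ren Suc id (ren fx fk B))) (ren fx fk A))"
    using assms(2) top_t.ad2[of "Var 0" "ren Suc id (ren fx fk B)"]
    by (simp add: ccv_red_Where1 top_t_ccv_red)
  also have "ccv_red \<dots> (Where (Where (App (Var 1) (Var 0)) DB) (ren fx fk A))"
    using rB by (simp add: ren_ren ccv_red_Where1 ccv_red_Where2)
  also have "ccv_red \<dots> (Where (Where (App (Var 1) (Var 0)) DB) DA)" using rA by (rule ccv_red_Where2)
  finally show "\<exists>D. ccv_red (ren fx fk (App A B)) D \<and>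
      eqvJ (vnfJ (invQ (cps fx fk (App A B) K))) (vnfJ (invK K D))"
    using e by blast
qed

lemma cps_sim_Where:
  assumes L: "cps_sim L" and M: "cps_sim M"
  shows "cps_sim (Where L M)"
  unfolding cps_sim_def
proof (intro allI)
  fix fx fk K
  let ?KL = "KLam (cps (lift fx) fk L (renK Suc id K))"
  obtain DM where rM: "ccv_red (ren fx fk M) DM"
    and eM: "eqvJ (vnfJ (invQ (cps fx fk M ?KL))) (vnfJ (invK ?KL DM))"
    using M unfolding cps_sim_def by blast
  obtain DL where rL: "ccv_red (ren (lift fx) fk L) DL"
    and eL: "eqvJ (vnfJ (invQ (cps (lift fx) fk L (renK Suc id K)))) (vnfJ (invK (renK Suc id K) DL))"
    using L unfolding cps_sim_def by blast
  have "eqvJ (vnfJ (invQ (cps fx fk (Where L M) K)))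
      (JWhere (vnfJ (invQ (cps (lift fx) fk L (renK Suc id K)))) (vnf DM))"
    using eM by simp
  also have "eqvJ \<dots> (JWhere (vnfJ (invK (renK Suc id K) DL)) (vnf DM))"
    using eL by (rule eqv_eqvJ.c_jwh1)
  also have "eqvJ \<dots> (vnfJ (invK K (Where DL DM)))" by (rule vnfJ_invK_Where)
  finally have "eqvJ (vnfJ (invQ (cps fx fk (Where L M) K))) (vnfJ (invK K (Where DL DM)))" .
  moreover have "ccv_red (ren fx fk (Where L M)) (Where DL DM)"
    using rL rM by (simp add: ccv_red_trans[OF ccv_red_Where1 ccv_red_Where2])
  ultimately show "\<exists>D. ccv_red (ren fx fk (Where L M)) D \<and>
      eqvJ (vnfJ (invQ (cps fx fk (Where L M) K))) (vnfJ (invK K D))"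
    by blast
qed

lemma cps_sim_Mu:
  assumes "cpsJ_sim J"
  shows "cps_sim (Mu J)"
  unfolding cps_sim_def
proof (intro allI)
  fix fx fk K
  obtain DJ where r: "ccv_redJ (renJ fx (lift fk) J) DJ"
    and e: "eqvJ (vnfJ (invQ (cpsJ fx (lift fk) J))) (vnfJ DJ)"
    using assms unfolding cpsJ_sim_def by blast
  have "eqvJ (vnfJ (invQ (cps fx fk (Mu J) K))) (vnfJ (invK K (Mu DJ)))"
    using vnfJ_invK_cong mu_vnf_eqvJ[OF e] by simp
  moreover have "ccv_red (ren fx fk (Mu J)) (Mu DJ)" using r by (simp add: ccv_red_Mu)
  ultimately show "\<exists>D. ccv_red (ren fx fk (Mu J)) D \<and>
      eqvJ (vnfJ (invQ (cps fx fk (Mu J) K))) (vnfJ (invK K D))"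
    by blast
qed

lemma cpsJ_sim_Jmp:
  assumes "cps_sim M"
  shows "cpsJ_sim (Jmp k M)"
  unfolding cpsJ_sim_def
proof (intro allI)
  fix fx fk
  obtain DM where "ccv_red (ren fx fk M) DM"
    and "eqvJ (vnfJ (invQ (cps fx fk M (KVar (fk k))))) (vnfJ (invK (KVar (fk k)) DM))"
    using assms unfolding cps_sim_def by blast
  then show "\<exists>D. ccv_redJ (renJ fx fk (Jmp k M)) D \<and> eqvJ (vnfJ (invQ (cpsJ fx fk (Jmp k M)))) (vnfJ D)"
    by (intro exI[of _ "Jmp (fk k) DM"]) (simp add: ccv_redJ_Jmp)
qed

lemma cpsJ_sim_JWhere:
  assumes J: "cpsJ_sim J" and M: "cps_sim M"
  shows "cpsJ_sim (JWhere J M)"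
  unfolding cpsJ_sim_def
proof (intro allI)
  fix fx fk
  let ?KJ = "KLam (cpsJ (lift fx) fk J)"
  obtain DM where rM: "ccv_red (ren fx fk M) DM"
    and eM: "eqvJ (vnfJ (invQ (cps fx fk M ?KJ))) (vnfJ (invK ?KJ DM))"
    using M unfolding cps_sim_def by blast
  obtain DJ where rJ: "ccv_redJ (renJ (lift fx) fk J) DJ"
    and eJ: "eqvJ (vnfJ (invQ (cpsJ (lift fx) fk J))) (vnfJ DJ)"
    using J unfolding cpsJ_sim_def by blast
  have "eqvJ (vnfJ (invQ (cpsJ fx fk (JWhere J M)))) (JWhere (vnfJ (invQ (cpsJ (lift fx) fk J))) (vnf DM))"
    using eM by simp
  also have "eqvJ \<dots> (vnfJ (JWhere DJ DM))" using eJ by (simp add: eqv_eqvJ.c_jwh1)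
  finally have "eqvJ (vnfJ (invQ (cpsJ fx fk (JWhere J M)))) (vnfJ (JWhere DJ DM))" .
  moreover have "ccv_redJ (renJ fx fk (JWhere J M)) (JWhere DJ DM)"
    using rJ rM by (simp add: ccv_redJ_trans[OF ccv_redJ_JWhere1 ccv_redJ_JWhere2])
  ultimately show "\<exists>D. ccv_redJ (renJ fx fk (JWhere J M)) D \<and>
      eqvJ (vnfJ (invQ (cpsJ fx fk (JWhere J M)))) (vnfJ D)"
    by blast
qed

lemma cps_sim_all: "cps_sim M \<and> (is_val M \<longrightarrow> cps_sim_val M)" "cpsJ_sim J"
proof (induction M and J)
  case (Var n)
  then show ?case using cps_sim_val_Var cps_sim_val_imp_cps_sim by simp
next
  case (Lam M)
  then show ?case using cps_sim_val_Lam cps_sim_val_imp_cps_sim by simp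
next
  case (App A B)
  then show ?case
    by (cases "is_val A"; cases "is_val B")
       (simp_all add: cps_sim_App_val_val cps_sim_App_val_nonval cps_sim_App_nonval_val
         cps_sim_App_nonval_nonval)
qed (simp_all add: cps_sim_Where cps_sim_Mu cpsJ_sim_Jmp cpsJ_sim_JWhere)

lemma ccv_red_vnf_inv_CPS: "ccv_red M (vnf (invT (CPS M)))"
proof -
  have "\<exists>D. ccv_red (ren id Suc M) D \<and>
      eqvJ (vnfJ (invQ (cps id Suc M (KVar 0)))) (vnfJ (invK (KVar 0) D))"
    using cps_sim_all(1)[of M] unfolding cps_sim_def by blast
  then obtain D where rD: "ccv_red (ren id Suc M) D"
    and eD: "eqvJ (vnfJ (invQ (cps id Suc M (KVar 0)))) (Jmp 0 (vnf D))"
    by auto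
  have "0 \<notin> kfv (vnf D)" using ccv_red_kfv[OF rD] by (auto simp: kfv_ren)
  then have CPS: "eqv (vnf (invT (CPS M))) (kunshift (vnf D))"
    using mu_vnf_eqvJ[OF eD] by (simp add: CPS_def mu_vnf_Jmp0)
  have "ccv_red (kunshift (ren id Suc M)) (kunshift (vnf D))"
    by (intro ccv_red_kunshift ccv_red_trans[OF rD ccv_red_vnf(1)])
  then have "ccv_red M (kunshift (vnf D))" by simp
  also have "ccv_red \<dots> (vnf (invT (CPS M)))" using eqv_eqvJ.sym[OF CPS] by (rule eqv_ccv_red)
  finally show ?thesis .
qed

theorem theorem1p34:
  fixes M :: trm and N :: tT
  assumes "stT\<^sup>*\<^sup>* (CPS M) N"
  shows "\<forall>P. vert_nf (invT N) P \<longrightarrow> ccv_red M P"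
proof (intro allI impI)
  fix P assume "vert_nf (invT N) P"
  have "ccv_red M (vnf (invT (CPS M)))" by (rule ccv_red_vnf_inv_CPS)
  also have "ccv_red \<dots> (vnf (invT N))" using assms by (rule simulate_steps)
  also have "ccv_red \<dots> P"
    using eqv_eqvJ.sym[OF vert_nf_eqv_vnf[OF \<open>vert_nf (invT N) P\<close>]] by (rule eqv_ccv_red)
  finally show "ccv_red M P" .
qed

end
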